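(* Let $(M,g)$ be a space-time of dimension $4$ admitting a time-like unit vector field $u$ ($u_ku^k=-1$) with $\nabla_iu_j=\varphi\,(g_{ij}+u_iu_j)$ for some scalar field $\varphi$. Let $C_{abcd}$ be the Weyl tensor and $E_{ad}=u^bu^cC_{abcd}$. Then $C_{abcd}=0$ if and only if $E_{ab}=0$.
   Context: $\nabla$ is the Levi-Civita connection; indices are raised and lowered with $g$. *)

theory Defs
  imports "HOL-Analysis.Analysis"
begin

text \<open>Points of a coordinate chart are points of an open set U of real^4; indices range
  over the 4-element type 4.  All tensors are given by their components.\<close>

type_synonym pt = "real^4"
type_synonym sfield = "pt \<Rightarrow> real"

definition partial :: "4 \<Rightarrow> sfield \<Rightarrow> sfield" where
  "partial k f x = deriv (\<lambda>t. f (x + t *\<^sub>R axis k 1)) 0"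

fun iter_partial :: "4 list \<Rightarrow> sfield \<Rightarrow> sfield" where
  "iter_partial [] f = f"
| "iter_partial (k # ks) f = partial k (iter_partial ks f)"

definition smooth_on :: "pt set \<Rightarrow> sfield \<Rightarrow> bool" where
  "smooth_on U f \<longleftrightarrow> (\<forall>ks. \<forall>x\<in>U. iter_partial ks f differentiable (at x))"

text \<open>Lorentzian signature (-,+,+,+) via Sylvester normal form.\<close>
definition minkowski :: "real^4^4" where
  "minkowski = (\<chi> i j. if i = j then (if i = 0 then -1 else 1) else 0)"

definition lorentzian_matrix :: "real^4^4 \<Rightarrow> bool" where
  "lorentzian_matrix A \<longleftrightarrow> transpose A = A \<and>
     (\<exists>P::real^4^4. invertible P \<and> transpose P ** A ** P = minkowski)"

definition lorentzian_metric :: "pt set \<Rightarrow> (pt \<Rightarrow> real^4^4) \<Rightarrow> bool" where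
  "lorentzian_metric U G \<longleftrightarrow> open U \<and>
     (\<forall>i j. smooth_on U (\<lambda>x. G x $ i $ j)) \<and> (\<forall>x\<in>U. lorentzian_matrix (G x))"

definition ginv :: "(pt \<Rightarrow> real^4^4) \<Rightarrow> pt \<Rightarrow> 4 \<Rightarrow> 4 \<Rightarrow> real" where
  "ginv G x i j = matrix_inv (G x) $ i $ j"

definition christoffel :: "(pt \<Rightarrow> real^4^4) \<Rightarrow> pt \<Rightarrow> 4 \<Rightarrow> 4 \<Rightarrow> 4 \<Rightarrow> real" where
  "christoffel G x k i j = (1/2) * (\<Sum>l\<in>UNIV. ginv G x k l *
     (partial i (\<lambda>y. G y $ j $ l) x + partial j (\<lambda>y. G y $ i $ l) x
      - partial l (\<lambda>y. G y $ i $ j) x))"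

definition riemann_up :: "(pt \<Rightarrow> real^4^4) \<Rightarrow> pt \<Rightarrow> 4 \<Rightarrow> 4 \<Rightarrow> 4 \<Rightarrow> 4 \<Rightarrow> real" where
  "riemann_up G x a b c d =
     partial c (\<lambda>y. christoffel G y a d b) x - partial d (\<lambda>y. christoffel G y a c b) x
     + (\<Sum>e\<in>UNIV. christoffel G x a c e * christoffel G x e d b
                 - christoffel G x a d e * christoffel G x e c b)"

definition riemann :: "(pt \<Rightarrow> real^4^4) \<Rightarrow> pt \<Rightarrow> 4 \<Rightarrow> 4 \<Rightarrow> 4 \<Rightarrow> 4 \<Rightarrow> real" where
  "riemann G x a b c d = (\<Sum>e\<in>UNIV. G x $ a $ e * riemann_up G x e b c d)"

definition ricci :: "(pt \<Rightarrow> real^4^4) \<Rightarrow> pt \<Rightarrow> 4 \<Rightarrow> 4 \<Rightarrow> real" where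
  "ricci G x b d = (\<Sum>a\<in>UNIV. riemann_up G x a b a d)"

definition scalar_curv :: "(pt \<Rightarrow> real^4^4) \<Rightarrow> pt \<Rightarrow> real" where
  "scalar_curv G x = (\<Sum>b\<in>UNIV. \<Sum>d\<in>UNIV. ginv G x b d * ricci G x b d)"

definition weyl :: "(pt \<Rightarrow> real^4^4) \<Rightarrow> pt \<Rightarrow> 4 \<Rightarrow> 4 \<Rightarrow> 4 \<Rightarrow> 4 \<Rightarrow> real" where
  "weyl G x a b c d =
     riemann G x a b c d
     - (1/2) * (G x $ a $ c * ricci G x b d - G x $ a $ d * ricci G x b c
                + G x $ b $ d * ricci G x a c - G x $ b $ c * ricci G x a d)
     + (scalar_curv G x / 6) * (G x $ a $ c * G x $ b $ d - G x $ a $ d * G x $ b $ c)"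

definition lower :: "(pt \<Rightarrow> real^4^4) \<Rightarrow> (pt \<Rightarrow> real^4) \<Rightarrow> pt \<Rightarrow> 4 \<Rightarrow> real" where
  "lower G u x i = (\<Sum>k\<in>UNIV. G x $ i $ k * u x $ k)"

definition cov_deriv_form :: "(pt \<Rightarrow> real^4^4) \<Rightarrow> (pt \<Rightarrow> real^4) \<Rightarrow> pt \<Rightarrow> 4 \<Rightarrow> 4 \<Rightarrow> real" where
  "cov_deriv_form G u x i j =
     partial i (\<lambda>y. lower G u y j) x - (\<Sum>k\<in>UNIV. christoffel G x k i j * lower G u x k)"

definition electric :: "(pt \<Rightarrow> real^4^4) \<Rightarrow> (pt \<Rightarrow> real^4) \<Rightarrow> pt \<Rightarrow> 4 \<Rightarrow> 4 \<Rightarrow> real" where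
  "electric G u x a d = (\<Sum>b\<in>UNIV. \<Sum>c\<in>UNIV. u x $ b * u x $ c * weyl G x a b c d)"

end

theory Submission
  imports Defs
begin

text \<open>Differentiating the torse-forming equation \<open>\<nabla>\<^sub>i u\<^sub>j = \<phi> h\<^sub>i\<^sub>j\<close>, \<open>h\<^sub>i\<^sub>j = g\<^sub>i\<^sub>j + u\<^sub>i u\<^sub>j\<close>,
  once more and applying the Ricci identity gives the integrability condition
  \<open>u\<^sub>e R\<^sup>e\<^sub>j\<^sub>a\<^sub>i = \<psi>\<^sub>i h\<^sub>a\<^sub>j - \<psi>\<^sub>a h\<^sub>i\<^sub>j\<close> with \<open>\<psi>\<^sub>a = \<partial>\<^sub>a\<phi> - \<phi>\<^sup>2 u\<^sub>a\<close>.
  Hence \<open>C\<^sub>a\<^sub>b\<^sub>c\<^sub>d u\<^sup>d\<close> is expressed through \<open>\<psi>\<close>, \<open>h\<close>, the Ricci tensor and the scalar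
  curvature. Contracting once more with \<open>u\<close>, the hypothesis \<open>E = 0\<close> determines the Ricci
  tensor, and substituting it back gives \<open>C\<^sub>a\<^sub>b\<^sub>c\<^sub>d u\<^sup>d = 0\<close>. In a Lorentz frame with
  time-like leg \<open>u\<close> the Weyl tensor therefore reduces to a trace-free tensor with the
  symmetries of a curvature tensor in dimension three, and such a tensor vanishes.\<close>

section \<open>Partial derivatives and smooth functions\<close>

lemma has_real_derivative_along_line:
  fixes f :: "real^4 \<Rightarrow> real"
  assumes "(f has_derivative D) (at (x + c *\<^sub>R v))"
  shows "((\<lambda>t. f (x + t *\<^sub>R v)) has_real_derivative D v) (at c)"
proof -
  have l: "((\<lambda>t. x + t *\<^sub>R v) has_derivative (\<lambda>t. t *\<^sub>R v)) (at c)"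
    by (auto intro!: derivative_eq_intros)
  have "((\<lambda>t. f (x + t *\<^sub>R v)) has_derivative (\<lambda>t. D (t *\<^sub>R v))) (at c)"
    using has_derivative_compose[OF l assms] by (simp add: o_def)
  moreover have "(\<lambda>t. D (t *\<^sub>R v)) = (\<lambda>t. D v * t)"
    using has_derivative_linear[OF assms] by (auto simp: linear_scale)
  ultimately show ?thesis by (simp add: has_field_derivative_def)
qed

lemma partial_eq_derivative:
  assumes "(f has_derivative D) (at x)"
  shows "partial k f x = D (axis k 1)"
proof -
  have "((\<lambda>t. f (x + t *\<^sub>R axis k 1)) has_real_derivative D (axis k 1)) (at 0)"
    using has_real_derivative_along_line[of f D x 0] assms by simp
  then show ?thesis unfolding partial_def by (rule DERIV_imp_deriv)
qed

lemma partial_eq_frechet_derivative: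
  assumes "f differentiable (at x)"
  shows "partial k f x = frechet_derivative f (at x) (axis k 1)"
  using assms frechet_derivative_works partial_eq_derivative by blast

lemma has_real_derivative_along_axis:
  assumes "f differentiable (at (x + c *\<^sub>R axis k 1))"
  shows "((\<lambda>t. f (x + t *\<^sub>R axis k 1)) has_real_derivative partial k f (x + c *\<^sub>R axis k 1)) (at c)"
  using assms has_real_derivative_along_line partial_eq_frechet_derivative frechet_derivative_works
  by metis

lemma partial_cong_open:
  assumes "open U" "x \<in> U" "\<And>y. y \<in> U \<Longrightarrow> f y = g y"
  shows "partial k f x = partial k g x"
  unfolding partial_def
proof (rule deriv_cong_ev[OF _ refl])
  have "open ((\<lambda>t. x + t *\<^sub>R axis k (1::real)) -` U)"
    by (rule open_vimage[OF assms(1)]) (intro continuous_intros)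
  moreover have "0 \<in> (\<lambda>t. x + t *\<^sub>R axis k (1::real)) -` U" using assms by simp
  ultimately show "\<forall>\<^sub>F t in nhds 0. f (x + t *\<^sub>R axis k 1) = g (x + t *\<^sub>R axis k 1)"
    using assms(3) by (auto simp: eventually_nhds)
qed

lemma partial_add:
  assumes "f differentiable (at x)" "g differentiable (at x)"
  shows "partial k (\<lambda>y. f y + g y) x = partial k f x + partial k g x"
  using partial_eq_derivative[OF has_derivative_add[OF assms[unfolded frechet_derivative_works]]]
    partial_eq_frechet_derivative assms by simp

lemma partial_diff:
  assumes "f differentiable (at x)" "g differentiable (at x)"
  shows "partial k (\<lambda>y. f y - g y) x = partial k f x - partial k g x"
  using partial_eq_derivative[OF has_derivative_diff[OF assms[unfolded frechet_derivative_works]]]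
    partial_eq_frechet_derivative assms by simp

lemma partial_mult:
  assumes "f differentiable (at x)" "g differentiable (at x)"
  shows "partial k (\<lambda>y. f y * g y) x = partial k f x * g x + f x * partial k g x"
  using partial_eq_derivative[OF has_derivative_mult[OF assms[unfolded frechet_derivative_works]]]
    partial_eq_frechet_derivative assms by simp

lemma partial_const: "partial k (\<lambda>y. c) x = 0"
  using partial_eq_derivative[OF has_derivative_const] by simp

lemma partial_cmult:
  assumes "f differentiable (at x)"
  shows "partial k (\<lambda>y. c * f y) x = c * partial k f x"
  using partial_mult[OF differentiable_const assms] by (simp add: partial_const)

lemma partial_sum:
  assumes "finite S" "\<And>i. i \<in> S \<Longrightarrow> f i differentiable (at x)"
  shows "partial k (\<lambda>y. \<Sum>i\<in>S. f i y) x = (\<Sum>i\<in>S. partial k (f i) x)"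
proof -
  have "((\<lambda>y. \<Sum>i\<in>S. f i y) has_derivative (\<lambda>h. \<Sum>i\<in>S. frechet_derivative (f i) (at x) h)) (at x)"
    by (rule has_derivative_sum) (use assms frechet_derivative_works in blast)
  from partial_eq_derivative[OF this] show ?thesis using assms partial_eq_frechet_derivative by simp
qed

lemma iter_partial_snoc: "iter_partial (ks @ [k]) f = iter_partial ks (partial k f)"
  by (induction ks) auto

lemma iter_partial_cong_open:
  assumes "open U" "\<And>y. y \<in> U \<Longrightarrow> f y = g y" "y \<in> U"
  shows "iter_partial ks f y = iter_partial ks g y"
  using assms(3)
proof (induction ks arbitrary: y)
  case Nil then show ?case using assms by simp
next
  case (Cons k ks)
  have "partial k (iter_partial ks f) y = partial k (iter_partial ks g) y"
    by (rule partial_cong_open[OF assms(1) Cons.prems]) (rule Cons.IH)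
  then show ?case by simp
qed

lemma differentiable_cong_open:
  assumes "open U" "\<And>y. y \<in> U \<Longrightarrow> f y = g y" "x \<in> U" "f differentiable (at x)"
  shows "g differentiable (at x)"
proof -
  from assms(4) obtain D where "(f has_derivative D) (at x)" by (auto simp: differentiable_def)
  then have "(g has_derivative D) (at x)"
    by (rule has_derivative_transform_within_open[OF _ assms(1,3,2)])
  then show ?thesis by (auto simp: differentiable_def)
qed

text \<open>Smoothness up to a given order, so that closure properties can be proved by induction.\<close>

definition smooth_upto :: "nat \<Rightarrow> pt set \<Rightarrow> sfield \<Rightarrow> bool" where
  "smooth_upto m U f \<longleftrightarrow>
     (\<forall>ks. length ks \<le> m \<longrightarrow> (\<forall>x\<in>U. iter_partial ks f differentiable (at x)))"

lemma smooth_on_iff_smooth_upto: "smooth_on U f \<longleftrightarrow> (\<forall>m. smooth_upto m U f)"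
  unfolding smooth_on_def smooth_upto_def
proof (intro iffI allI impI)
  fix ks :: "4 list"
  assume "\<forall>m ks. length ks \<le> m \<longrightarrow> (\<forall>x\<in>U. iter_partial ks f differentiable (at x))"
  then show "\<forall>x\<in>U. iter_partial ks f differentiable (at x)" by blast
qed blast

lemma smooth_upto_mono: "smooth_upto m U f \<Longrightarrow> n \<le> m \<Longrightarrow> smooth_upto n U f"
  unfolding smooth_upto_def by auto

lemma smooth_upto_imp_differentiable: "smooth_upto m U f \<Longrightarrow> x \<in> U \<Longrightarrow> f differentiable (at x)"
  unfolding smooth_upto_def by (erule allE[of _ "[]"]) simp

lemma smooth_upto_partial:
  assumes "smooth_upto (Suc m) U f"
  shows "smooth_upto m U (partial k f)"
  unfolding smooth_upto_def
proof (intro allI impI ballI)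
  fix ks :: "4 list" and x
  assume "length ks \<le> m" "x \<in> U"
  with assms have "iter_partial (ks @ [k]) f differentiable (at x)"
    unfolding smooth_upto_def by simp
  then show "iter_partial ks (partial k f) differentiable (at x)" by (simp add: iter_partial_snoc)
qed

lemma smooth_upto_cong_open:
  assumes "open U" "\<And>y. y \<in> U \<Longrightarrow> f y = g y" "smooth_upto m U f"
  shows "smooth_upto m U g"
  unfolding smooth_upto_def
proof (intro allI impI ballI)
  fix ks :: "4 list" and x
  assume "length ks \<le> m" "x \<in> U"
  then have "iter_partial ks f differentiable (at x)" using assms(3) smooth_upto_def by blast
  moreover have "\<And>y. y \<in> U \<Longrightarrow> iter_partial ks f y = iter_partial ks g y"
    by (rule iter_partial_cong_open[OF assms(1,2)])
  ultimately show "iter_partial ks g differentiable (at x)"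
    using differentiable_cong_open[OF assms(1), of "iter_partial ks f" "iter_partial ks g" x]
      \<open>x \<in> U\<close> by blast
qed

lemma iter_partial_add:
  assumes "open U" "smooth_upto m U f" "smooth_upto m U g" "length ks \<le> m" "y \<in> U"
  shows "iter_partial ks (\<lambda>z. f z + g z) y = iter_partial ks f y + iter_partial ks g y"
  using assms(4,5)
proof (induction ks arbitrary: y)
  case Nil then show ?case by simp
next
  case (Cons k ks)
  have "iter_partial (k # ks) (\<lambda>z. f z + g z) y
      = partial k (\<lambda>z. iter_partial ks f z + iter_partial ks g z) y"
    by (simp, rule partial_cong_open[OF assms(1) Cons.prems(2)]) (use Cons in simp)
  also have "\<dots> = partial k (iter_partial ks f) y + partial k (iter_partial ks g) y"
    by (rule partial_add) (use assms Cons.prems in \<open>auto simp: smooth_upto_def\<close>)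
  finally show ?case by simp
qed

lemma smooth_upto_add:
  assumes "open U" "smooth_upto m U f" "smooth_upto m U g"
  shows "smooth_upto m U (\<lambda>z. f z + g z)"
  unfolding smooth_upto_def
proof (intro allI impI ballI)
  fix ks :: "4 list" and x
  assume ks: "length ks \<le> m" and x: "x \<in> U"
  have "(\<lambda>z. iter_partial ks f z + iter_partial ks g z) differentiable (at x)"
    using assms(2,3) ks x unfolding smooth_upto_def by (intro differentiable_add) auto
  then show "iter_partial ks (\<lambda>z. f z + g z) differentiable (at x)"
    using differentiable_cong_open[OF assms(1), of "\<lambda>z. iter_partial ks f z + iter_partial ks g z"]
      iter_partial_add[OF assms ks] x by simp
qed

lemma smooth_upto_const: "smooth_upto m U (\<lambda>z. c)"
proof -
  have "iter_partial ks (\<lambda>z. c) = (\<lambda>z. if ks = [] then c else 0)" for ks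
    by (induction ks) (simp_all add: partial_const)
  then show ?thesis unfolding smooth_upto_def by simp
qed

lemma smooth_upto_mult:
  assumes "open U" "smooth_upto m U f" "smooth_upto m U g"
  shows "smooth_upto m U (\<lambda>z. f z * g z)"
  using assms(2,3)
proof (induction m arbitrary: f g)
  case 0
  then show ?case unfolding smooth_upto_def by (auto intro!: differentiable_mult)
next
  case (Suc m)
  show ?case unfolding smooth_upto_def
  proof (intro allI impI ballI)
    fix ks :: "4 list" and x
    assume ks: "length ks \<le> Suc m" and x: "x \<in> U"
    show "iter_partial ks (\<lambda>z. f z * g z) differentiable (at x)"
    proof (cases ks rule: rev_cases)
      case Nil
      then show ?thesis
        using Suc.prems x by (auto intro!: differentiable_mult dest: smooth_upto_imp_differentiable)
    next
      case (snoc ks' k)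
      have "smooth_upto m U (\<lambda>y. partial k f y * g y + f y * partial k g y)"
      proof (intro smooth_upto_add[OF assms(1)] Suc.IH smooth_upto_partial)
        show "smooth_upto (Suc m) U f" "smooth_upto (Suc m) U g" by (fact Suc.prems)+
        show "smooth_upto m U f" "smooth_upto m U g"
          using Suc.prems smooth_upto_mono le_SucI by blast+
      qed
      moreover have "partial k (\<lambda>z. f z * g z) y = partial k f y * g y + f y * partial k g y"
        if "y \<in> U" for y
        using partial_mult Suc.prems smooth_upto_imp_differentiable that by blast
      ultimately have "smooth_upto m U (partial k (\<lambda>z. f z * g z))"
        using smooth_upto_cong_open[OF assms(1),
            of "\<lambda>y. partial k f y * g y + f y * partial k g y" "partial k (\<lambda>z. f z * g z)"]
        by simp
      then show ?thesis using ks x snoc by (simp add: iter_partial_snoc smooth_upto_def)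
    qed
  qed
qed

lemma smooth_on_add:
  "open U \<Longrightarrow> smooth_on U f \<Longrightarrow> smooth_on U g \<Longrightarrow> smooth_on U (\<lambda>z. f z + g z)"
  by (simp add: smooth_on_iff_smooth_upto smooth_upto_add)

lemma smooth_on_mult:
  "open U \<Longrightarrow> smooth_on U f \<Longrightarrow> smooth_on U g \<Longrightarrow> smooth_on U (\<lambda>z. f z * g z)"
  by (simp add: smooth_on_iff_smooth_upto smooth_upto_mult)

lemma smooth_on_const: "smooth_on U (\<lambda>z. c)"
  by (simp add: smooth_on_iff_smooth_upto smooth_upto_const)

lemma smooth_on_partial: "smooth_on U f \<Longrightarrow> smooth_on U (partial k f)"
  by (simp add: smooth_on_iff_smooth_upto smooth_upto_partial)

lemma smooth_on_imp_differentiable: "smooth_on U f \<Longrightarrow> x \<in> U \<Longrightarrow> f differentiable (at x)"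
  using smooth_on_iff_smooth_upto smooth_upto_imp_differentiable by blast

lemma smooth_on_sum:
  assumes "open U" "finite S" "\<And>i. i \<in> S \<Longrightarrow> smooth_on U (f i)"
  shows "smooth_on U (\<lambda>z. \<Sum>i\<in>S. f i z)"
  using assms(2,3)
  by (induction S rule: finite_induct) (simp_all add: smooth_on_const smooth_on_add[OF assms(1)])

section \<open>Symmetry of second partial derivatives\<close>

lemma norm_add_axes_le: "norm (a *\<^sub>R axis i 1 + b *\<^sub>R axis j 1 :: real^4) \<le> \<bar>a\<bar> + \<bar>b\<bar>"
  using norm_triangle_ineq[of "a *\<^sub>R axis i (1::real)" "b *\<^sub>R axis j 1"] by simp

lemma second_difference_mvt:
  fixes f :: sfield
  assumes sm: "smooth_on U f" and ball: "ball x r \<subseteq> U" and s: "0 < s" "2 * s < r"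
  shows "\<exists>y. dist y x \<le> 2 * s \<and>
     f (x + s *\<^sub>R axis i 1 + s *\<^sub>R axis j 1) - f (x + s *\<^sub>R axis i 1) - f (x + s *\<^sub>R axis j 1) + f x
     = s * s * partial j (partial i f) y"
proof -
  define e :: "real^4" where "e = axis i 1"
  define d :: "real^4" where "d = axis j 1"
  have inU: "x + a *\<^sub>R e + b *\<^sub>R d \<in> U" if "\<bar>a\<bar> \<le> s" "\<bar>b\<bar> \<le> s" for a b
  proof -
    have "dist (x + a *\<^sub>R e + b *\<^sub>R d) x < r"
      using norm_add_axes_le[of a i b j] that s unfolding e_def d_def dist_norm by simp
    then show ?thesis using ball by (auto simp: dist_commute)
  qed
  let ?fi = "partial i f"
  define g where "g = (\<lambda>\<sigma>. f ((x + s *\<^sub>R d) + \<sigma> *\<^sub>R e) - f (x + \<sigma> *\<^sub>R e))"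
  have "DERIV g \<sigma> :> ?fi ((x + s *\<^sub>R d) + \<sigma> *\<^sub>R e) - ?fi (x + \<sigma> *\<^sub>R e)"
    if "0 \<le> \<sigma>" "\<sigma> \<le> s" for \<sigma>
  proof -
    have "(x + s *\<^sub>R d) + \<sigma> *\<^sub>R e \<in> U" "x + \<sigma> *\<^sub>R e \<in> U"
      using inU[of \<sigma> s] inU[of \<sigma> 0] that s by (simp_all add: add_ac)
    then show ?thesis unfolding g_def e_def
      by (intro DERIV_diff has_real_derivative_along_axis smooth_on_imp_differentiable[OF sm]) auto
  qed
  then obtain z where z: "0 < z" "z < s"
    "g s - g 0 = s * (?fi ((x + s *\<^sub>R d) + z *\<^sub>R e) - ?fi (x + z *\<^sub>R e))"
    using MVT2[OF s(1), of g "\<lambda>\<sigma>. ?fi ((x + s *\<^sub>R d) + \<sigma> *\<^sub>R e) - ?fi (x + \<sigma> *\<^sub>R e)"] by auto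
  define h where "h = (\<lambda>\<tau>. ?fi ((x + z *\<^sub>R e) + \<tau> *\<^sub>R d))"
  have "DERIV h \<tau> :> partial j ?fi ((x + z *\<^sub>R e) + \<tau> *\<^sub>R d)" if "0 \<le> \<tau>" "\<tau> \<le> s" for \<tau>
  proof -
    have "(x + z *\<^sub>R e) + \<tau> *\<^sub>R d \<in> U" using inU[of z \<tau>] that z by simp
    then show ?thesis unfolding h_def d_def
      by (intro has_real_derivative_along_axis smooth_on_imp_differentiable[OF smooth_on_partial[OF sm]])
        auto
  qed
  then obtain w where w: "0 < w" "w < s"
    "h s - h 0 = s * partial j ?fi ((x + z *\<^sub>R e) + w *\<^sub>R d)"
    using MVT2[OF s(1), of h "\<lambda>\<tau>. partial j ?fi ((x + z *\<^sub>R e) + \<tau> *\<^sub>R d)"] by auto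
  have "f (x + s *\<^sub>R e + s *\<^sub>R d) - f (x + s *\<^sub>R e) - f (x + s *\<^sub>R d) + f x = g s - g 0"
    by (simp add: g_def add_ac)
  also have "\<dots> = s * (h s - h 0)" using z(3) by (simp add: h_def add_ac)
  also have "\<dots> = s * s * partial j ?fi (x + z *\<^sub>R e + w *\<^sub>R d)" using w(3) by simp
  finally have "f (x + s *\<^sub>R e + s *\<^sub>R d) - f (x + s *\<^sub>R e) - f (x + s *\<^sub>R d) + f x
      = s * s * partial j ?fi (x + z *\<^sub>R e + w *\<^sub>R d)" .
  moreover have "dist (x + z *\<^sub>R e + w *\<^sub>R d) x \<le> 2 * s"
    using norm_add_axes_le[of z i w j] z w unfolding e_def d_def dist_norm by simp
  ultimately show ?thesis unfolding e_def d_def by blast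
qed

text \<open>Clairaut: both mixed partials are continuous at \<open>x\<close>, and by the mean value theorem
  each of them equals the same second difference quotient at nearby points.\<close>

lemma partial_commute:
  fixes f :: sfield
  assumes U: "open U" and x: "x \<in> U" and sm: "smooth_on U f"
  shows "partial i (partial j f) x = partial j (partial i f) x"
proof (rule ccontr)
  let ?A = "partial j (partial i f)" and ?B = "partial i (partial j f)"
  assume ne: "?B x \<noteq> ?A x"
  define \<epsilon> where "\<epsilon> = \<bar>?A x - ?B x\<bar> / 2"
  have "\<epsilon> > 0" using ne by (simp add: \<epsilon>_def)
  have "continuous (at x) ?A" "continuous (at x) ?B"
    by (intro differentiable_imp_continuous_within smooth_on_imp_differentiable[OF _ x]
        smooth_on_partial sm)+
  then obtain d1 d2 where d1: "d1 > 0" "\<And>y. dist y x < d1 \<Longrightarrow> dist (?A y) (?A x) < \<epsilon>"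
    and d2: "d2 > 0" "\<And>y. dist y x < d2 \<Longrightarrow> dist (?B y) (?B x) < \<epsilon>"
    using \<open>\<epsilon> > 0\<close> unfolding continuous_at_eps_delta by blast
  obtain r where r: "r > 0" "ball x r \<subseteq> U" using U x openE by blast
  define s where "s = min r (min d1 d2) / 3"
  have s: "0 < s" "2 * s < r" "2 * s < d1" "2 * s < d2" using r d1 d2 by (auto simp: s_def)
  obtain y1 where 1: "dist y1 x \<le> 2 * s"
    "f (x + s *\<^sub>R axis i 1 + s *\<^sub>R axis j 1) - f (x + s *\<^sub>R axis i 1) - f (x + s *\<^sub>R axis j 1) + f x
     = s * s * ?A y1"
    using second_difference_mvt[OF sm r(2) s(1,2), of i j] by blast
  obtain y2 where 2: "dist y2 x \<le> 2 * s"
    "f (x + s *\<^sub>R axis j 1 + s *\<^sub>R axis i 1) - f (x + s *\<^sub>R axis j 1) - f (x + s *\<^sub>R axis i 1) + f x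
     = s * s * ?B y2"
    using second_difference_mvt[OF sm r(2) s(1,2), of j i] by blast
  have swap: "x + s *\<^sub>R axis j 1 + s *\<^sub>R axis i 1 = x + s *\<^sub>R axis i 1 + s *\<^sub>R axis j (1::real)"
    by (simp add: add_ac)
  have "s * s * ?A y1 = s * s * ?B y2" using 1(2) 2(2)[unfolded swap] by linarith
  then have "?A y1 = ?B y2" using s(1) by simp
  moreover have "dist (?A y1) (?A x) < \<epsilon>" by (rule d1(2)) (use 1(1) s in linarith)
  moreover have "dist (?B y2) (?B x) < \<epsilon>" by (rule d2(2)) (use 2(1) s in linarith)
  ultimately show False unfolding dist_real_def \<epsilon>_def
    by (cases "?A x \<le> ?B x") (auto simp: abs_if split: if_split_asm)
qed

section \<open>Finite sums and Lorentzian matrices\<close>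

lemma UNIV_4_eq: "(UNIV::4 set) = {0, 1, 2, 3}"
  unfolding UNIV_4 by auto

lemma forall_4: "(\<forall>i::4. P i) \<longleftrightarrow> P 0 \<and> P 1 \<and> P 2 \<and> P 3"
  by (metis UNIV_4_eq UNIV_I insertE singletonD)

lemma sum_UNIV_4: "(\<Sum>i\<in>(UNIV::4 set). f i) = f 0 + f 1 + f 2 + f 3"
  unfolding UNIV_4_eq by (simp add: ac_simps)

lemma prod_UNIV_4: "(\<Prod>i\<in>(UNIV::4 set). f i) = f 0 * f 1 * f 2 * f 3"
  unfolding UNIV_4_eq by (simp add: ac_simps)

lemma sum_delta_mult:
  fixes f :: "'i::finite \<Rightarrow> 'a::semiring_1"
  shows "(\<Sum>k\<in>UNIV. (if i = k then 1 else 0) * f k) = f i"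
    and "(\<Sum>k\<in>UNIV. (if k = i then 1 else 0) * f k) = f i"
  by (simp_all add: if_distrib[of "\<lambda>c. c * _"] cong: if_cong)

lemma sum_mult_sum_commute:
  fixes f g :: "'i::finite \<Rightarrow> 'a::comm_semiring_0"
  shows "(\<Sum>i\<in>UNIV. f i * (\<Sum>j\<in>UNIV. g j * H i j)) = (\<Sum>j\<in>UNIV. g j * (\<Sum>i\<in>UNIV. f i * H i j))"
  unfolding sum_distrib_left by (subst sum.swap) (simp add: mult_ac)

lemma det_minkowski: "det minkowski = -1"
  by (subst det_diagonal) (auto simp: minkowski_def prod_UNIV_4)

lemma minkowski_squared: "minkowski ** minkowski = mat 1"
  by (simp add: vec_eq_iff matrix_matrix_mult_def minkowski_def mat_def sum_UNIV_4 forall_4)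

lemma det_congruent_minkowski_nonzero:
  assumes "transpose P ** A ** P = minkowski"
  shows "det P \<noteq> 0" "det A \<noteq> 0"
proof -
  have "det (transpose P ** A ** P) = det P * det A * det P" by (simp add: det_mul)
  then show "det P \<noteq> 0" "det A \<noteq> 0" using assms det_minkowski by auto
qed

lemma lorentzian_matrix_det_nonzero: "lorentzian_matrix A \<Longrightarrow> det A \<noteq> 0"
  unfolding lorentzian_matrix_def using det_congruent_minkowski_nonzero by blast

lemma transpose_eq_imp_symmetric: "transpose A = A \<Longrightarrow> A $ i $ j = A $ j $ i"
  by (metis transpose_def vec_lambda_beta)

lemma lorentzian_matrix_symmetric: "lorentzian_matrix A \<Longrightarrow> A $ i $ j = A $ j $ i"
  unfolding lorentzian_matrix_def by (blast intro: transpose_eq_imp_symmetric)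

lemma matrix_inv_inverse:
  fixes A :: "real^'n^'n"
  assumes "det A \<noteq> 0"
  shows "A ** matrix_inv A = mat 1 \<and> matrix_inv A ** A = mat 1"
proof -
  have "\<exists>A'. A ** A' = mat 1 \<and> A' ** A = mat 1"
    using assms invertible_det_nz unfolding invertible_def by blast
  then show ?thesis unfolding matrix_inv_def by (rule someI_ex)
qed

lemma matrix_inv_right: "det (A::real^'n^'n) \<noteq> 0 \<Longrightarrow> A ** matrix_inv A = mat 1"
  using matrix_inv_inverse by blast

lemma matrix_inv_left: "det (A::real^'n^'n) \<noteq> 0 \<Longrightarrow> matrix_inv A ** A = mat 1"
  using matrix_inv_inverse by blast

lemma matrix_inv_symmetric:
  fixes A :: "real^'n^'n"
  assumes "det A \<noteq> 0" "transpose A = A"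
  shows "matrix_inv A $ i $ j = matrix_inv A $ j $ i"
proof -
  let ?B = "matrix_inv A"
  have "transpose ?B ** A = transpose ?B ** transpose A" using assms(2) by simp
  also have "\<dots> = mat 1"
    using matrix_inv_right[OF assms(1)] by (simp flip: matrix_transpose_mul)
  finally have "transpose ?B ** A = mat 1" .
  then have "transpose ?B = transpose ?B ** (A ** ?B)" using matrix_inv_right[OF assms(1)] by simp
  also have "\<dots> = ?B" by (simp add: matrix_mul_assoc \<open>transpose ?B ** A = mat 1\<close>)
  finally show ?thesis by (rule transpose_eq_imp_symmetric)
qed

lemma matrix_inv_cramer:
  fixes A :: "real^'n^'n"
  assumes "det A \<noteq> 0"
  shows "matrix_inv A $ k $ l = det (\<chi> i j. if j = k then axis l 1 $ i else A $ i $ j) / det A"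
proof -
  let ?x = "matrix_inv A *v axis l 1"
  have "A *v ?x = axis l 1" using matrix_inv_right[OF assms] by (simp add: matrix_vector_mul_assoc)
  then have "?x $ k = det (\<chi> i j. if j = k then axis l 1 $ i else A $ i $ j) / det A"
    using cramer[OF assms] by simp
  moreover have "?x $ k = matrix_inv A $ k $ l"
    by (simp add: matrix_vector_mult_def axis_def if_distrib cong: if_cong)
  ultimately show ?thesis by simp
qed

lemma differentiable_prod:
  fixes f :: "'i \<Rightarrow> 'a::real_normed_vector \<Rightarrow> real"
  assumes "\<And>i. i \<in> I \<Longrightarrow> f i differentiable (at x)"
  shows "(\<lambda>y. \<Prod>i\<in>I. f i y) differentiable (at x)"
proof -
  obtain D where "\<forall>i\<in>I. (f i has_derivative D i) (at x)"
    using assms unfolding differentiable_def by metis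
  then show ?thesis unfolding differentiable_def by (blast intro: has_derivative_prod)
qed

lemma differentiable_det:
  fixes M :: "'a::real_normed_vector \<Rightarrow> real^'n^'n"
  assumes "\<And>i j. (\<lambda>y. M y $ i $ j) differentiable (at x)"
  shows "(\<lambda>y. det (M y)) differentiable (at x)"
  unfolding det_def
  by (intro differentiable_sum differentiable_mult differentiable_const differentiable_prod ballI
      finite_permutations) (use assms in auto)

section \<open>Curvature and covariant derivatives in a Lorentzian chart\<close>

definition christoffel_first :: "(pt \<Rightarrow> real^4^4) \<Rightarrow> pt \<Rightarrow> 4 \<Rightarrow> 4 \<Rightarrow> 4 \<Rightarrow> real" where
  "christoffel_first G y l i j = (1/2) * (partial i (\<lambda>y. G y $ j $ l) y
      + partial j (\<lambda>y. G y $ i $ l) y - partial l (\<lambda>y. G y $ i $ j) y)"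

lemma christoffel_eq_ginv_first:
  "christoffel G y k i j = (\<Sum>l\<in>UNIV. ginv G y k l * christoffel_first G y l i j)"
  unfolding christoffel_def christoffel_first_def by (simp add: sum_distrib_left algebra_simps)

definition christoffel_square :: "(pt \<Rightarrow> real^4^4) \<Rightarrow> pt \<Rightarrow> 4 \<Rightarrow> 4 \<Rightarrow> 4 \<Rightarrow> 4 \<Rightarrow> real" where
  "christoffel_square G x a b c d =
     (\<Sum>e\<in>UNIV. \<Sum>f\<in>UNIV. ginv G x e f * christoffel_first G x e c a * christoffel_first G x f d b)"

definition cov_deriv1 :: "(pt \<Rightarrow> real^4^4) \<Rightarrow> (pt \<Rightarrow> 4 \<Rightarrow> real) \<Rightarrow> pt \<Rightarrow> 4 \<Rightarrow> 4 \<Rightarrow> real" where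
  "cov_deriv1 G w x i j = partial i (\<lambda>y. w y j) x - (\<Sum>k\<in>UNIV. christoffel G x k i j * w x k)"

definition cov_deriv2 ::
  "(pt \<Rightarrow> real^4^4) \<Rightarrow> (pt \<Rightarrow> 4 \<Rightarrow> 4 \<Rightarrow> real) \<Rightarrow> pt \<Rightarrow> 4 \<Rightarrow> 4 \<Rightarrow> 4 \<Rightarrow> real" where
  "cov_deriv2 G T x a i j = partial a (\<lambda>y. T y i j) x
     - (\<Sum>k\<in>UNIV. christoffel G x k a i * T x k j + christoffel G x k a j * T x i k)"

lemma cov_deriv_form_eq_cov_deriv1: "cov_deriv_form G u = cov_deriv1 G (lower G u)"
  by (intro ext) (simp add: cov_deriv_form_def cov_deriv1_def)

lemma cov_deriv2_cong_open:
  assumes "open U" "x \<in> U" "\<And>y i j. y \<in> U \<Longrightarrow> S y i j = T y i j"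
  shows "cov_deriv2 G S x a i j = cov_deriv2 G T x a i j"
proof -
  have "partial a (\<lambda>y. S y i j) x = partial a (\<lambda>y. T y i j) x"
    by (rule partial_cong_open[OF assms(1,2)]) (use assms(3) in blast)
  then show ?thesis unfolding cov_deriv2_def using assms(2,3) by simp
qed

lemma cov_deriv2_add:
  assumes "\<And>i j. (\<lambda>y. S y i j) differentiable (at x)" "\<And>i j. (\<lambda>y. T y i j) differentiable (at x)"
  shows "cov_deriv2 G (\<lambda>y i j. S y i j + T y i j) x a i j = cov_deriv2 G S x a i j + cov_deriv2 G T x a i j"
  unfolding cov_deriv2_def partial_add[OF assms] by (simp add: algebra_simps sum.distrib)

lemma cov_deriv2_scale:
  assumes "f differentiable (at x)" "\<And>i j. (\<lambda>y. T y i j) differentiable (at x)"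
  shows "cov_deriv2 G (\<lambda>y i j. f y * T y i j) x a i j = partial a f x * T x i j + f x * cov_deriv2 G T x a i j"
  unfolding cov_deriv2_def partial_mult[OF assms] by (simp add: algebra_simps sum.distrib sum_distrib_left)

lemma cov_deriv2_tensor_square:
  assumes "\<And>i. (\<lambda>y. w y i) differentiable (at x)"
  shows "cov_deriv2 G (\<lambda>y i j. w y i * w y j) x a i j
    = cov_deriv1 G w x a i * w x j + w x i * cov_deriv1 G w x a j"
  unfolding cov_deriv2_def cov_deriv1_def
  by (simp add: partial_mult[OF assms assms] algebra_simps sum.distrib sum_distrib_left sum_distrib_right)

lemma riemann_up_antisym_cd: "riemann_up G x a b c d = - riemann_up G x a b d c"
  unfolding riemann_up_def by (simp add: sum_subtractf sum_negf algebra_simps)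

locale lorentzian_chart =
  fixes U :: "pt set" and G :: "pt \<Rightarrow> real^4^4"
  assumes metric: "lorentzian_metric U G"
begin

lemma open_chart: "open U"
  using metric lorentzian_metric_def by blast

lemma metric_smooth: "smooth_on U (\<lambda>y. G y $ i $ j)"
  using metric lorentzian_metric_def by blast

lemma metric_lorentzian: "x \<in> U \<Longrightarrow> lorentzian_matrix (G x)"
  using metric lorentzian_metric_def by blast

lemma metric_symmetric: "x \<in> U \<Longrightarrow> G x $ i $ j = G x $ j $ i"
  using metric_lorentzian lorentzian_matrix_symmetric by blast

lemma metric_det_nonzero: "x \<in> U \<Longrightarrow> det (G x) \<noteq> 0"
  using metric_lorentzian lorentzian_matrix_det_nonzero by blast

lemma metric_ginv: "x \<in> U \<Longrightarrow> (\<Sum>k\<in>UNIV. G x $ i $ k * ginv G x k j) = (if i = j then 1 else 0)"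
  using matrix_inv_right[OF metric_det_nonzero, of x]
  by (simp add: vec_eq_iff matrix_matrix_mult_def mat_def ginv_def)

lemma ginv_metric: "x \<in> U \<Longrightarrow> (\<Sum>k\<in>UNIV. ginv G x i k * G x $ k $ j) = (if i = j then 1 else 0)"
  using matrix_inv_left[OF metric_det_nonzero, of x]
  by (simp add: vec_eq_iff matrix_matrix_mult_def mat_def ginv_def)

lemma ginv_symmetric: "x \<in> U \<Longrightarrow> ginv G x i j = ginv G x j i"
  unfolding ginv_def
  using matrix_inv_symmetric metric_det_nonzero metric_lorentzian lorentzian_matrix_def by blast

lemma metric_differentiable: "x \<in> U \<Longrightarrow> (\<lambda>y. G y $ i $ j) differentiable (at x)"
  using metric_smooth smooth_on_imp_differentiable by blast

lemma partial_metric_differentiable: "x \<in> U \<Longrightarrow> partial k (\<lambda>y. G y $ i $ j) differentiable (at x)"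
  using metric_smooth smooth_on_partial smooth_on_imp_differentiable by blast

lemma ginv_differentiable: "x \<in> U \<Longrightarrow> (\<lambda>y. ginv G y k l) differentiable (at x)"
proof -
  assume x: "x \<in> U"
  let ?M = "\<lambda>y. (\<chi> i j. if j = k then axis l 1 $ i else G y $ i $ j) :: real^4^4"
  have "(\<lambda>y. det (?M y) / det (G y)) differentiable (at x)"
  proof (intro differentiable_divide differentiable_det)
    show "(\<lambda>y. ?M y $ i $ j) differentiable (at x)" for i j
      by (cases "j = k") (auto intro: metric_differentiable[OF x])
  qed (use metric_differentiable metric_det_nonzero x in auto)
  moreover have "det (?M y) / det (G y) = ginv G y k l" if "y \<in> U" for y
    unfolding ginv_def by (rule matrix_inv_cramer[symmetric], rule metric_det_nonzero[OF that])
  ultimately show ?thesis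
    using differentiable_cong_open[OF open_chart, of "\<lambda>y. det (?M y) / det (G y)" "\<lambda>y. ginv G y k l"] x
    by blast
qed

lemma christoffel_first_differentiable:
  "x \<in> U \<Longrightarrow> (\<lambda>y. christoffel_first G y l i j) differentiable (at x)"
  unfolding christoffel_first_def by (intro derivative_intros partial_metric_differentiable)

lemma christoffel_differentiable: "x \<in> U \<Longrightarrow> (\<lambda>y. christoffel G y k i j) differentiable (at x)"
  unfolding christoffel_eq_ginv_first
  by (intro differentiable_sum ballI differentiable_mult ginv_differentiable
      christoffel_first_differentiable) auto

lemma partial_metric_symmetric:
  "x \<in> U \<Longrightarrow> partial a (\<lambda>y. G y $ i $ j) x = partial a (\<lambda>y. G y $ j $ i) x"
  by (rule partial_cong_open[OF open_chart], assumption, rule metric_symmetric)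

lemma partial_partial_metric_symmetric: "x \<in> U \<Longrightarrow>
  partial c (partial a (\<lambda>y. G y $ i $ j)) x = partial c (partial a (\<lambda>y. G y $ j $ i)) x"
  by (rule partial_cong_open[OF open_chart], assumption, rule partial_metric_symmetric)

lemma christoffel_first_symmetric: "x \<in> U \<Longrightarrow> christoffel_first G x l i j = christoffel_first G x l j i"
  unfolding christoffel_first_def using partial_metric_symmetric[of x l i j] by simp

lemma christoffel_symmetric: "x \<in> U \<Longrightarrow> christoffel G x k i j = christoffel G x k j i"
  unfolding christoffel_eq_ginv_first using christoffel_first_symmetric by simp

lemma partial_christoffel_symmetric: "x \<in> U \<Longrightarrow>
  partial c (\<lambda>y. christoffel G y a d b) x = partial c (\<lambda>y. christoffel G y a b d) x"
  by (rule partial_cong_open[OF open_chart], assumption, rule christoffel_symmetric)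

lemma partial_metric_eq_christoffel_first: "x \<in> U \<Longrightarrow>
  partial a (\<lambda>y. G y $ i $ j) x = christoffel_first G x i a j + christoffel_first G x j a i"
  unfolding christoffel_first_def using partial_metric_symmetric[of x a i j] by (simp add: field_simps)

lemma metric_christoffel:
  assumes x: "x \<in> U"
  shows "(\<Sum>k\<in>UNIV. G x $ l $ k * christoffel G x k i j) = christoffel_first G x l i j"
proof -
  have "(\<Sum>k\<in>UNIV. G x $ l $ k * christoffel G x k i j)
      = (\<Sum>m\<in>UNIV. (\<Sum>k\<in>UNIV. G x $ l $ k * ginv G x k m) * christoffel_first G x m i j)"
    unfolding christoffel_eq_ginv_first sum_distrib_left sum_distrib_right
    by (subst sum.swap) (simp add: mult.assoc)
  then show ?thesis by (simp add: metric_ginv[OF x] sum_delta_mult)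
qed

lemma partial_christoffel_first: "x \<in> U \<Longrightarrow> partial c (\<lambda>y. christoffel_first G y l i j) x =
   (1/2) * (partial c (partial i (\<lambda>y. G y $ j $ l)) x + partial c (partial j (\<lambda>y. G y $ i $ l)) x
      - partial c (partial l (\<lambda>y. G y $ i $ j)) x)"
proof -
  assume x: "x \<in> U"
  let ?P1 = "partial i (\<lambda>y. G y $ j $ l)" and ?P2 = "partial j (\<lambda>y. G y $ i $ l)"
    and ?P3 = "partial l (\<lambda>y. G y $ i $ j)"
  have "partial c (\<lambda>y. (1/2) * (?P1 y + ?P2 y - ?P3 y)) x
      = (1/2) * partial c (\<lambda>y. ?P1 y + ?P2 y - ?P3 y) x"
    by (rule partial_cmult) (intro differentiable_diff differentiable_add partial_metric_differentiable x)
  also have "partial c (\<lambda>y. ?P1 y + ?P2 y - ?P3 y) x = partial c (\<lambda>y. ?P1 y + ?P2 y) x - partial c ?P3 x"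
    by (rule partial_diff) (intro differentiable_add partial_metric_differentiable x)+
  also have "partial c (\<lambda>y. ?P1 y + ?P2 y) x = partial c ?P1 x + partial c ?P2 x"
    by (rule partial_add) (intro partial_metric_differentiable x)+
  finally show ?thesis unfolding christoffel_first_def .
qed

lemma metric_partial_christoffel:
  assumes x: "x \<in> U"
  shows "(\<Sum>e\<in>UNIV. G x $ a $ e * partial c (\<lambda>y. christoffel G y e d b) x)
       = partial c (\<lambda>y. christoffel_first G y a d b) x
         - (\<Sum>e\<in>UNIV. partial c (\<lambda>y. G y $ a $ e) x * christoffel G x e d b)"
proof -
  have "partial c (\<lambda>y. \<Sum>e\<in>UNIV. G y $ a $ e * christoffel G y e d b) x
      = partial c (\<lambda>y. christoffel_first G y a d b) x"
    by (rule partial_cong_open[OF open_chart x]) (rule metric_christoffel)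
  moreover have "partial c (\<lambda>y. \<Sum>e\<in>UNIV. G y $ a $ e * christoffel G y e d b) x
      = (\<Sum>e\<in>UNIV. partial c (\<lambda>y. G y $ a $ e) x * christoffel G x e d b
          + G x $ a $ e * partial c (\<lambda>y. christoffel G y e d b) x)"
    by (simp add: partial_sum partial_mult differentiable_mult metric_differentiable
        christoffel_differentiable x)
  ultimately show ?thesis by (simp add: sum.distrib)
qed

lemma metric_christoffel_christoffel:
  assumes x: "x \<in> U"
  shows "(\<Sum>e\<in>UNIV. G x $ a $ e * (\<Sum>f\<in>UNIV. christoffel G x e c f * christoffel G x f d b))
       = (\<Sum>f\<in>UNIV. christoffel_first G x a c f * christoffel G x f d b)"
  unfolding metric_christoffel[OF x, symmetric] sum_distrib_left sum_distrib_right
  by (subst sum.swap) (simp add: mult.assoc)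

lemma christoffel_square_swap: "x \<in> U \<Longrightarrow> christoffel_square G x a b c d = christoffel_square G x b a d c"
  unfolding christoffel_square_def by (subst sum.swap) (simp add: ginv_symmetric mult_ac)

lemma riemann_eq_christoffel_first:
  assumes x: "x \<in> U"
  shows "riemann G x a b c d
     = partial c (\<lambda>y. christoffel_first G y a d b) x - partial d (\<lambda>y. christoffel_first G y a c b) x
       - christoffel_square G x a b c d + christoffel_square G x a b d c"
proof -
  let ?C = "christoffel G x" and ?F = "christoffel_first G x"
  have square: "(\<Sum>e\<in>UNIV. ?F e c a * ?C e d b) = christoffel_square G x a b c d" for a b c d
    unfolding christoffel_square_def christoffel_eq_ginv_first by (simp add: sum_distrib_left mult_ac)
  have "riemann G x a b c d =
      (\<Sum>e\<in>UNIV. G x $ a $ e * partial c (\<lambda>y. christoffel G y e d b) x)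
    - (\<Sum>e\<in>UNIV. G x $ a $ e * partial d (\<lambda>y. christoffel G y e c b) x)
    + (\<Sum>e\<in>UNIV. G x $ a $ e * (\<Sum>f\<in>UNIV. ?C e c f * ?C f d b))
    - (\<Sum>e\<in>UNIV. G x $ a $ e * (\<Sum>f\<in>UNIV. ?C e d f * ?C f c b))"
    unfolding riemann_def riemann_up_def
    by (simp add: algebra_simps sum.distrib sum_subtractf sum_distrib_left)
  also have "\<dots> = partial c (\<lambda>y. christoffel_first G y a d b) x
       - (\<Sum>e\<in>UNIV. (?F a c e + ?F e c a) * ?C e d b)
     - (partial d (\<lambda>y. christoffel_first G y a c b) x - (\<Sum>e\<in>UNIV. (?F a d e + ?F e d a) * ?C e c b))
     + (\<Sum>f\<in>UNIV. ?F a c f * ?C f d b) - (\<Sum>f\<in>UNIV. ?F a d f * ?C f c b)"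
    by (simp add: metric_partial_christoffel[OF x] metric_christoffel_christoffel[OF x]
        partial_metric_eq_christoffel_first[OF x])
  also have "\<dots> = partial c (\<lambda>y. christoffel_first G y a d b) x - partial d (\<lambda>y. christoffel_first G y a c b) x
     - (\<Sum>e\<in>UNIV. ?F e c a * ?C e d b) + (\<Sum>e\<in>UNIV. ?F e d a * ?C e c b)"
    by (simp add: algebra_simps sum.distrib)
  finally show ?thesis by (simp add: square)
qed

text \<open>The second derivatives of the metric cancel by the symmetry of mixed partials.\<close>

lemma riemann_antisym_ab:
  assumes x: "x \<in> U"
  shows "riemann G x a b c d = - riemann G x b a c d"
proof -
  have "partial c (\<lambda>y. christoffel_first G y a d b) x + partial c (\<lambda>y. christoffel_first G y b d a) x
      = partial c (partial d (\<lambda>y. G y $ a $ b)) x"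
    unfolding partial_christoffel_first[OF x]
    using partial_partial_metric_symmetric[OF x, of c d a b] by (simp add: field_simps)
  moreover have "partial d (\<lambda>y. christoffel_first G y a c b) x + partial d (\<lambda>y. christoffel_first G y b c a) x
      = partial d (partial c (\<lambda>y. G y $ a $ b)) x"
    unfolding partial_christoffel_first[OF x]
    using partial_partial_metric_symmetric[OF x, of d c a b] by (simp add: field_simps)
  moreover have "partial c (partial d (\<lambda>y. G y $ a $ b)) x = partial d (partial c (\<lambda>y. G y $ a $ b)) x"
    by (rule partial_commute[OF open_chart x metric_smooth])
  ultimately show ?thesis
    unfolding riemann_eq_christoffel_first[OF x]
    using christoffel_square_swap[OF x, of a b c d] christoffel_square_swap[OF x, of a b d c]
    by linarith
qed

lemma riemann_up_bianchi:
  assumes x: "x \<in> U"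
  shows "riemann_up G x a b c d + riemann_up G x a c d b + riemann_up G x a d b c = 0"
proof -
  let ?C = "christoffel G x"
  have "(\<Sum>e\<in>UNIV. ?C a c e * ?C e d b - ?C a d e * ?C e c b)
      + (\<Sum>e\<in>UNIV. ?C a d e * ?C e b c - ?C a b e * ?C e d c)
      + (\<Sum>e\<in>UNIV. ?C a b e * ?C e c d - ?C a c e * ?C e b d) = 0"
    using christoffel_symmetric[OF x] by (simp add: sum.distrib[symmetric] algebra_simps)
  then show ?thesis
    unfolding riemann_up_def
    using partial_christoffel_symmetric[OF x, of c a d b] partial_christoffel_symmetric[OF x, of d a b c]
      partial_christoffel_symmetric[OF x, of b a c d]
    by linarith
qed

lemma partial_cov_deriv1:
  assumes w: "\<And>j. smooth_on U (\<lambda>y. w y j)" and x: "x \<in> U"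
  shows "partial a (\<lambda>y. cov_deriv1 G w y i j) x = partial a (partial i (\<lambda>y. w y j)) x
    - (\<Sum>k\<in>UNIV. partial a (\<lambda>y. christoffel G y k i j) x * w x k
        + christoffel G x k i j * partial a (\<lambda>y. w y k) x)"
proof -
  have dw: "(\<lambda>y. w y k) differentiable (at x)" "partial i (\<lambda>y. w y k) differentiable (at x)" for i k
    using w smooth_on_partial smooth_on_imp_differentiable x by blast+
  show ?thesis
    unfolding cov_deriv1_def
    by (simp add: partial_diff partial_sum partial_mult dw christoffel_differentiable x
        differentiable_sum differentiable_mult)
qed

text \<open>On antisymmetrising in
  \<open>a, i\<close>, the second partials of \<open>w\<close> commute, the terms with \<open>\<Gamma>\<^sup>k\<^sub>a\<^sub>i\<close> cancel by symmetry, and the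
  first partials of \<open>w\<close> cancel pairwise.\<close>

lemma ricci_identity:
  assumes w: "\<And>j. smooth_on U (\<lambda>y. w y j)" and x: "x \<in> U"
  shows "cov_deriv2 G (cov_deriv1 G w) x a i j - cov_deriv2 G (cov_deriv1 G w) x i a j
       = - (\<Sum>e\<in>UNIV. w x e * riemann_up G x e j a i)"
proof -
  let ?C = "christoffel G x"
    and ?dC = "\<lambda>a k i j. partial a (\<lambda>y. christoffel G y k i j) x"
    and ?dw = "\<lambda>a k. partial a (\<lambda>y. w y k) x"
  have expand: "cov_deriv2 G (cov_deriv1 G w) x a i j =
      partial a (partial i (\<lambda>y. w y j)) x
      - (\<Sum>k\<in>UNIV. ?dC a k i j * w x k) - (\<Sum>k\<in>UNIV. ?C k i j * ?dw a k)
      - (\<Sum>k\<in>UNIV. ?C k a j * ?dw i k) - (\<Sum>k\<in>UNIV. ?C k a i * cov_deriv1 G w x k j)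
      + (\<Sum>k\<in>UNIV. ?C k a j * (\<Sum>l\<in>UNIV. ?C l i k * w x l))" for a i
    unfolding cov_deriv2_def partial_cov_deriv1[OF w x]
    by (simp add: cov_deriv1_def[of G w x i] algebra_simps sum.distrib sum_subtractf)
  have "(\<Sum>k\<in>UNIV. ?C k a i * cov_deriv1 G w x k j) = (\<Sum>k\<in>UNIV. ?C k i a * cov_deriv1 G w x k j)"
    using christoffel_symmetric[OF x] by simp
  moreover have "partial a (partial i (\<lambda>y. w y j)) x = partial i (partial a (\<lambda>y. w y j)) x"
    by (rule partial_commute[OF open_chart x w])
  moreover have quadratic: "(\<Sum>k\<in>UNIV. ?C k p j * (\<Sum>l\<in>UNIV. ?C l q k * w x l))
      = (\<Sum>e\<in>UNIV. w x e * (\<Sum>f\<in>UNIV. ?C e q f * ?C f p j))" for p q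
    unfolding sum_distrib_left by (subst sum.swap) (simp add: mult_ac)
  moreover have "(\<Sum>e\<in>UNIV. w x e * riemann_up G x e j a i)
      = (\<Sum>e\<in>UNIV. ?dC a e i j * w x e) - (\<Sum>e\<in>UNIV. ?dC i e a j * w x e)
        + (\<Sum>e\<in>UNIV. w x e * (\<Sum>f\<in>UNIV. ?C e a f * ?C f i j))
        - (\<Sum>e\<in>UNIV. w x e * (\<Sum>f\<in>UNIV. ?C e i f * ?C f a j))"
    unfolding riemann_up_def
    by (simp add: algebra_simps sum.distrib sum_subtractf sum_distrib_left)
  ultimately show ?thesis using expand[of a i] expand[of i a] quadratic[of a i] quadratic[of i a]
    by linarith
qed

lemma cov_deriv2_metric: "x \<in> U \<Longrightarrow> cov_deriv2 G (\<lambda>y i j. G y $ i $ j) x a i j = 0"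
  unfolding cov_deriv2_def
  using metric_christoffel[of x j a i] metric_christoffel[of x i a j]
    partial_metric_eq_christoffel_first[of x a i j] metric_symmetric[of x]
  by (simp add: sum.distrib mult.commute)

end

section \<open>The integrability condition of a torse-forming vector field\<close>

locale torse_forming_chart = lorentzian_chart +
  fixes u :: "pt \<Rightarrow> real^4" and \<phi> :: "pt \<Rightarrow> real"
  assumes u_smooth: "\<forall>k. smooth_on U (\<lambda>x. u x $ k)"
    and phi_smooth: "smooth_on U \<phi>"
    and torse: "\<forall>x\<in>U. \<forall>i j. cov_deriv_form G u x i j
                    = \<phi> x * (G x $ i $ j + lower G u x i * lower G u x j)"
begin

lemma lower_smooth: "smooth_on U (\<lambda>y. lower G u y j)"
  unfolding lower_def
  by (intro smooth_on_sum open_chart finite_UNIV smooth_on_mult metric_smooth) (use u_smooth in auto)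

lemma lower_differentiable: "x \<in> U \<Longrightarrow> (\<lambda>y. lower G u y j) differentiable (at x)"
  using lower_smooth smooth_on_imp_differentiable by blast

lemma cov_deriv1_lower: "x \<in> U \<Longrightarrow>
  cov_deriv1 G (lower G u) x i j = \<phi> x * (G x $ i $ j + lower G u x i * lower G u x j)"
  using torse unfolding cov_deriv_form_eq_cov_deriv1 by blast

lemma cov_deriv2_cov_deriv1_lower:
  assumes x: "x \<in> U"
  shows "cov_deriv2 G (cov_deriv1 G (lower G u)) x a i j
    = partial a \<phi> x * (G x $ i $ j + lower G u x i * lower G u x j)
      + (\<phi> x)\<^sup>2 * ((G x $ a $ i + lower G u x a * lower G u x i) * lower G u x j
                  + lower G u x i * (G x $ a $ j + lower G u x a * lower G u x j))"
proof -
  let ?w = "lower G u"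
  have "cov_deriv2 G (cov_deriv1 G ?w) x a i j
      = cov_deriv2 G (\<lambda>y i j. \<phi> y * (G y $ i $ j + ?w y i * ?w y j)) x a i j"
    by (rule cov_deriv2_cong_open[OF open_chart x]) (rule cov_deriv1_lower)
  also have "\<dots> = partial a \<phi> x * (G x $ i $ j + ?w x i * ?w x j)
      + \<phi> x * (cov_deriv2 G (\<lambda>y i j. G y $ i $ j) x a i j
               + cov_deriv2 G (\<lambda>y i j. ?w y i * ?w y j) x a i j)"
    using phi_smooth metric_differentiable lower_differentiable x
    by (simp add: cov_deriv2_scale cov_deriv2_add differentiable_add differentiable_mult
        smooth_on_imp_differentiable)
  also have "\<dots> = partial a \<phi> x * (G x $ i $ j + ?w x i * ?w x j)
      + \<phi> x * (cov_deriv1 G ?w x a i * ?w x j + ?w x i * cov_deriv1 G ?w x a j)"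
    by (simp add: cov_deriv2_metric cov_deriv2_tensor_square lower_differentiable x)
  finally show ?thesis by (simp add: cov_deriv1_lower x power2_eq_square algebra_simps)
qed

text \<open>With \<open>\<psi>\<^sub>a = \<partial>\<^sub>a\<phi> - \<phi>\<^sup>2 u\<^sub>a\<close> and \<open>h\<^sub>i\<^sub>j = g\<^sub>i\<^sub>j + u\<^sub>i u\<^sub>j\<close>, this reads
  \<open>u\<^sub>e R\<^sup>e\<^sub>j\<^sub>a\<^sub>i = \<psi>\<^sub>i h\<^sub>a\<^sub>j - \<psi>\<^sub>a h\<^sub>i\<^sub>j\<close>.\<close>

lemma lower_riemann_up:
  assumes x: "x \<in> U"
  shows "(\<Sum>e\<in>UNIV. lower G u x e * riemann_up G x e j a i)
    = - (partial a \<phi> x - (\<phi> x)\<^sup>2 * lower G u x a) * (G x $ i $ j + lower G u x i * lower G u x j)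
      + (partial i \<phi> x - (\<phi> x)\<^sup>2 * lower G u x i) * (G x $ a $ j + lower G u x a * lower G u x j)"
  using ricci_identity[where w = "lower G u" and a = a and i = i and j = j, OF lower_smooth x]
    cov_deriv2_cov_deriv1_lower[OF x, of a i j] cov_deriv2_cov_deriv1_lower[OF x, of i a j]
    metric_symmetric[OF x, of a i]
  by (simp add: algebra_simps)

end

section \<open>The Weyl tensor at a point\<close>

locale torse_forming_point =
  fixes g gi :: "4 \<Rightarrow> 4 \<Rightarrow> real" and Rup R C :: "4 \<Rightarrow> 4 \<Rightarrow> 4 \<Rightarrow> 4 \<Rightarrow> real"
    and u w \<psi> :: "4 \<Rightarrow> real" and ric :: "4 \<Rightarrow> 4 \<Rightarrow> real" and S :: real
  assumes g_symmetric: "g i j = g j i" and gi_symmetric: "gi i j = gi j i"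
    and gi_g: "(\<Sum>k\<in>UNIV. gi i k * g k j) = (if i = j then 1 else 0)"
    and R_def: "R a b c d = (\<Sum>e\<in>UNIV. g a e * Rup e b c d)"
    and Rup_antisym_cd: "Rup a b c d = - Rup a b d c"
    and Rup_bianchi: "Rup a b c d + Rup a c d b + Rup a d b c = 0"
    and R_antisym_ab: "R a b c d = - R b a c d"
    and ric_def: "ric b d = (\<Sum>a\<in>UNIV. Rup a b a d)"
    and S_def: "S = (\<Sum>b\<in>UNIV. \<Sum>d\<in>UNIV. gi b d * ric b d)"
    and C_def: "C a b c d = R a b c d
     - (1/2) * (g a c * ric b d - g a d * ric b c + g b d * ric a c - g b c * ric a d)
     + (S / 6) * (g a c * g b d - g a d * g b c)"
    and w_def: "w k = (\<Sum>j\<in>UNIV. g k j * u j)"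
    and unit: "(\<Sum>k\<in>UNIV. w k * u k) = -1"
    and w_Rup: "(\<Sum>e\<in>UNIV. w e * Rup e j a i) = - \<psi> a * (g i j + w i * w j) + \<psi> i * (g a j + w a * w j)"
begin

lemma R_antisym_cd: "R a b c d = - R a b d c"
  unfolding R_def by (subst Rup_antisym_cd) (simp add: sum_negf)

lemma R_bianchi: "R a b c d + R a c d b + R a d b c = 0"
proof -
  have "R a b c d + R a c d b + R a d b c = (\<Sum>e\<in>UNIV. g a e * (Rup e b c d + Rup e c d b + Rup e d b c))"
    unfolding R_def by (simp add: sum.distrib distrib_left)
  then show ?thesis by (simp add: Rup_bianchi)
qed

lemma R_pair_symmetric: "R a b c d = R c d a b"
proof -
  have B1: "R a b c d + R a c d b + R a d b c = 0" by (rule R_bianchi)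
  have B2: "R b c d a + R b d a c + R b a c d = 0" by (rule R_bianchi)
  have B3: "R c d a b + R c a b d + R c b d a = 0" by (rule R_bianchi)
  have B4: "R d a b c + R d b c a + R d c a b = 0" by (rule R_bianchi)
  have "R b a c d = - R a b c d" "R d c a b = - R c d a b" "R c a b d = - R a c b d"
    "R a c b d = - R a c d b" "R d a b c = - R a d b c" "R c b d a = - R b c d a"
    "R d b c a = - R b d c a" "R b d c a = - R b d a c"
    using R_antisym_ab[of b a c d] R_antisym_ab[of d c a b] R_antisym_ab[of c a b d]
      R_antisym_cd[of a c b d] R_antisym_ab[of d a b c] R_antisym_ab[of c b d a]
      R_antisym_ab[of d b c a] R_antisym_cd[of b d c a]
    by simp_all
  then show ?thesis using B1 B2 B3 B4 by linarith
qed

lemma gi_g_apply: "(\<Sum>c\<in>UNIV. gi a c * (\<Sum>j\<in>UNIV. g c j * X j)) = X a"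
proof -
  have "(\<Sum>c\<in>UNIV. gi a c * (\<Sum>j\<in>UNIV. g c j * X j)) = (\<Sum>j\<in>UNIV. (\<Sum>c\<in>UNIV. gi a c * g c j) * X j)"
    unfolding sum_distrib_left sum_distrib_right by (subst sum.swap) (simp add: mult.assoc)
  then show ?thesis by (simp add: gi_g sum_delta_mult)
qed

lemma gi_g_contract: "(\<Sum>a\<in>UNIV. \<Sum>c\<in>UNIV. gi a c * (g a d * X c)) = X d"
proof -
  have "(\<Sum>a\<in>UNIV. \<Sum>c\<in>UNIV. gi a c * (g a d * X c)) = (\<Sum>c\<in>UNIV. (\<Sum>a\<in>UNIV. gi c a * g a d) * X c)"
    by (subst sum.swap) (simp add: sum_distrib_right gi_symmetric mult.assoc)
  then show ?thesis by (simp add: gi_g sum_delta_mult)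
qed

lemma Rup_eq_gi_R: "Rup a b c d = (\<Sum>e\<in>UNIV. gi a e * R e b c d)"
  unfolding R_def by (rule gi_g_apply[symmetric])

lemma ric_eq_trace_R: "ric b d = (\<Sum>a\<in>UNIV. \<Sum>c\<in>UNIV. gi a c * R a b c d)"
proof -
  have "ric b d = (\<Sum>c\<in>UNIV. \<Sum>a\<in>UNIV. gi c a * R a b c d)"
    unfolding ric_def Rup_eq_gi_R by simp
  also have "\<dots> = (\<Sum>a\<in>UNIV. \<Sum>c\<in>UNIV. gi a c * R a b c d)"
    by (subst sum.swap) (simp add: gi_symmetric)
  finally show ?thesis .
qed

lemma ric_symmetric: "ric b d = ric d b"
proof -
  have "ric b d = (\<Sum>a\<in>UNIV. \<Sum>c\<in>UNIV. gi a c * R c d a b)"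
  proof -
    have "\<And>a c. R a b c d = R c d a b" by (rule R_pair_symmetric)
    then show ?thesis unfolding ric_eq_trace_R by (simp only:)
  qed
  also have "\<dots> = (\<Sum>c\<in>UNIV. \<Sum>a\<in>UNIV. gi c a * R c d a b)"
    by (subst sum.swap) (simp add: gi_symmetric)
  also have "\<dots> = ric d b" unfolding ric_eq_trace_R by simp
  finally show ?thesis .
qed

lemma C_antisym_ab: "C a b c d = - C b a c d"
  unfolding C_def using R_antisym_ab[of a b c d] by (simp add: algebra_simps)

lemma C_antisym_cd: "C a b c d = - C a b d c"
  unfolding C_def using R_antisym_cd[of a b c d] by (simp add: algebra_simps)

lemma C_pair_symmetric: "C a b c d = C c d a b"
  unfolding C_def
  using R_pair_symmetric[of a b c d] g_symmetric[of a c] g_symmetric[of b d] g_symmetric[of a d]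
    g_symmetric[of b c] ric_symmetric[of b d] ric_symmetric[of a c] ric_symmetric[of b c]
    ric_symmetric[of a d]
  by (simp add: algebra_simps)

lemma gi_w: "(\<Sum>c\<in>UNIV. gi a c * w c) = u a"
  unfolding w_def by (rule gi_g_apply)

lemma trace_gi_g: "(\<Sum>a\<in>UNIV. \<Sum>c\<in>UNIV. gi a c * g a c) = 4"
proof -
  have "(\<Sum>a\<in>UNIV. \<Sum>c\<in>UNIV. gi a c * g a c) = (\<Sum>a\<in>UNIV. (\<Sum>c\<in>UNIV. gi a c * g c a))"
    by (rule sum.cong[OF refl])+ (metis g_symmetric)
  also have "\<dots> = (\<Sum>a\<in>(UNIV::4 set). 1)" by (simp add: gi_g)
  finally show ?thesis by simp
qed

lemma C_trace_free: "(\<Sum>a\<in>UNIV. \<Sum>c\<in>UNIV. gi a c * C a b c d) = 0"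
proof -
  let ?tr = "\<lambda>X. \<Sum>a\<in>UNIV. \<Sum>c\<in>UNIV. gi a c * X a c"
  have "?tr (\<lambda>a c. C a b c d) = ?tr (\<lambda>a c. R a b c d)
      - 1/2 * (?tr (\<lambda>a c. g a c * ric b d) - ?tr (\<lambda>a c. g a d * ric b c)
               + ?tr (\<lambda>a c. g b d * ric a c) - ?tr (\<lambda>a c. g b c * ric a d))
      + S/6 * (?tr (\<lambda>a c. g a c * g b d) - ?tr (\<lambda>a c. g a d * g b c))"
    unfolding C_def by (simp add: algebra_simps sum.distrib sum_subtractf sum_distrib_left)
  moreover have "?tr (\<lambda>a c. g a c * k) = 4 * k" for k
    using trace_gi_g by (simp add: mult.assoc[symmetric] sum_distrib_right[symmetric])
  moreover have "?tr (\<lambda>a c. g b c * ric a d) = ric b d"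
    using gi_g_contract[of b "\<lambda>c. ric c d"]
    by (subst sum.swap) (simp add: gi_symmetric g_symmetric)
  moreover have "?tr (\<lambda>a c. g b d * ric a c) = g b d * S"
    unfolding S_def by (simp add: sum_distrib_left mult_ac)
  ultimately show ?thesis by (simp add: gi_g_contract ric_eq_trace_R[symmetric]) (simp add: field_simps)
qed

definition h where "h i j = g i j + w i * w j"
definition psi_u where "psi_u = (\<Sum>a\<in>UNIV. u a * \<psi> a)"

lemma u_R_eq_w_Rup: "(\<Sum>k\<in>UNIV. u k * R k j a i) = (\<Sum>e\<in>UNIV. w e * Rup e j a i)"
proof -
  have "(\<Sum>k\<in>UNIV. u k * R k j a i) = (\<Sum>k\<in>UNIV. \<Sum>e\<in>UNIV. u k * g k e * Rup e j a i)"
    unfolding R_def by (simp add: sum_distrib_left mult.assoc)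
  also have "\<dots> = (\<Sum>e\<in>UNIV. \<Sum>k\<in>UNIV. u k * g k e * Rup e j a i)" by (rule sum.swap)
  also have "\<dots> = (\<Sum>e\<in>UNIV. (\<Sum>k\<in>UNIV. g e k * u k) * Rup e j a i)"
    by (rule sum.cong[OF refl], unfold sum_distrib_right, rule sum.cong[OF refl]) (metis g_symmetric mult.commute)
  finally show ?thesis unfolding w_def .
qed

lemma R_contract_u: "(\<Sum>d\<in>UNIV. R a b c d * u d) = \<psi> a * h b c - \<psi> b * h a c"
proof -
  have "\<And>d. R a b c d = - R d c a b" using R_pair_symmetric[of a b c] R_antisym_ab by (metis)
  then have "(\<Sum>d\<in>UNIV. R a b c d * u d) = - (\<Sum>d\<in>UNIV. u d * R d c a b)"
    by (simp add: sum_negf mult.commute)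
  also have "\<dots> = \<psi> a * h b c - \<psi> b * h a c"
    unfolding u_R_eq_w_Rup w_Rup h_def using g_symmetric[of b c] g_symmetric[of a c] by (simp add: algebra_simps)
  finally show ?thesis .
qed

lemma u_w: "(\<Sum>a\<in>UNIV. u a * w a) = -1" using unit by (simp add: mult.commute)

lemma u_g: "(\<Sum>a\<in>UNIV. u a * g a c) = w c"
  unfolding w_def by (rule sum.cong[OF refl]) (metis g_symmetric mult.commute)

lemma gi_h: "(\<Sum>c\<in>UNIV. gi a c * h b c) = (if a = b then 1 else 0) + w b * u a"
proof -
  have "(\<Sum>c\<in>UNIV. gi a c * h b c) = (\<Sum>c\<in>UNIV. gi a c * g c b) + w b * (\<Sum>c\<in>UNIV. gi a c * w c)"
    unfolding h_def by (simp add: algebra_simps sum.distrib sum_distrib_left g_symmetric[of b])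
  then show ?thesis by (simp add: gi_g gi_w)
qed

lemma trace_gi_h: "(\<Sum>a\<in>UNIV. \<Sum>c\<in>UNIV. gi a c * h a c) = 3"
proof -
  have "(\<Sum>a\<in>UNIV. \<Sum>c\<in>UNIV. gi a c * h a c) = (\<Sum>a\<in>UNIV. \<Sum>c\<in>UNIV. gi a c * g a c) + (\<Sum>a\<in>UNIV. (\<Sum>c\<in>UNIV. gi a c * w c) * w a)"
    unfolding h_def by (simp add: algebra_simps sum.distrib sum_distrib_left sum_distrib_right)
  then show ?thesis by (simp add: trace_gi_g gi_w u_w)
qed

lemma ric_contract_u: "(\<Sum>d\<in>UNIV. ric b d * u d) = - 2 * \<psi> b + w b * psi_u"
proof -
  have "(\<Sum>d\<in>UNIV. ric b d * u d) = (\<Sum>d\<in>UNIV. \<Sum>a\<in>UNIV. \<Sum>c\<in>UNIV. gi a c * R a b c d * u d)"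
    unfolding ric_eq_trace_R by (simp add: sum_distrib_right)
  also have "\<dots> = (\<Sum>a\<in>UNIV. \<Sum>c\<in>UNIV. gi a c * (\<Sum>d\<in>UNIV. R a b c d * u d))"
  proof -
    have "(\<Sum>d\<in>UNIV. \<Sum>a\<in>UNIV. \<Sum>c\<in>UNIV. gi a c * R a b c d * u d)
        = (\<Sum>a\<in>UNIV. \<Sum>d\<in>UNIV. \<Sum>c\<in>UNIV. gi a c * R a b c d * u d)" by (rule sum.swap)
    also have "\<dots> = (\<Sum>a\<in>UNIV. \<Sum>c\<in>UNIV. \<Sum>d\<in>UNIV. gi a c * R a b c d * u d)"
      by (rule sum.cong[OF refl], rule sum.swap)
    finally show ?thesis by (simp add: sum_distrib_left mult.assoc)
  qed
  also have "\<dots> = (\<Sum>a\<in>UNIV. \<Sum>c\<in>UNIV. gi a c * (\<psi> a * h b c - \<psi> b * h a c))"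
    by (simp add: R_contract_u)
  also have "\<dots> = (\<Sum>a\<in>UNIV. \<psi> a * (\<Sum>c\<in>UNIV. gi a c * h b c)) - \<psi> b * (\<Sum>a\<in>UNIV. \<Sum>c\<in>UNIV. gi a c * h a c)"
    by (simp add: right_diff_distrib sum_subtractf sum_distrib_left mult_ac)
  also have "\<dots> = (\<Sum>a\<in>UNIV. \<psi> a * ((if a = b then 1 else 0) + w b * u a)) - \<psi> b * 3"
    unfolding trace_gi_h by (simp add: gi_h)
  also have "\<dots> = \<psi> b + w b * psi_u - 3 * \<psi> b"
  proof -
    have "\<And>a. \<psi> a * ((if a = b then 1 else 0) + w b * u a) = (if a = b then 1 else 0) * \<psi> a + w b * (u a * \<psi> a)"
      by (simp add: algebra_simps)
    then show ?thesis by (simp add: sum.distrib sum_delta_mult psi_u_def sum_distrib_left[symmetric])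
  qed
  finally show ?thesis by simp
qed

lemma C_contract_u: "(\<Sum>d\<in>UNIV. C a b c d * u d) =
   (\<psi> a * h b c - \<psi> b * h a c)
   - (1/2) * (g a c * (- 2 * \<psi> b + w b * psi_u) - w a * ric b c + w b * ric a c - g b c * (- 2 * \<psi> a + w a * psi_u))
   + (S / 6) * (g a c * w b - w a * g b c)"
proof -
  have "(\<Sum>d\<in>UNIV. C a b c d * u d) = (\<Sum>d\<in>UNIV. R a b c d * u d)
     - (1/2) * (g a c * (\<Sum>d\<in>UNIV. ric b d * u d) - (\<Sum>d\<in>UNIV. g a d * u d) * ric b c
                + (\<Sum>d\<in>UNIV. g b d * u d) * ric a c - g b c * (\<Sum>d\<in>UNIV. ric a d * u d))
     + (S / 6) * (g a c * (\<Sum>d\<in>UNIV. g b d * u d) - (\<Sum>d\<in>UNIV. g a d * u d) * g b c)"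
    unfolding C_def by (simp add: algebra_simps sum.distrib sum_subtractf sum_distrib_left sum_distrib_right)
  then show ?thesis unfolding R_contract_u ric_contract_u w_def[symmetric] by simp
qed

lemma u_C_contract_u_eq_0:
  assumes electric_0: "\<forall>a d. (\<Sum>b\<in>UNIV. \<Sum>c\<in>UNIV. u b * u c * C a b c d) = 0"
  shows "(\<Sum>a\<in>UNIV. u a * (\<Sum>d\<in>UNIV. C a b c d * u d)) = 0"
proof -
  have "(\<Sum>a\<in>UNIV. u a * (\<Sum>d\<in>UNIV. C a b c d * u d)) = (\<Sum>a\<in>UNIV. \<Sum>d\<in>UNIV. u a * u d * C c d a b)"
  proof -
    have "(\<Sum>a\<in>UNIV. u a * (\<Sum>d\<in>UNIV. C a b c d * u d)) = (\<Sum>a\<in>UNIV. \<Sum>d\<in>UNIV. u a * (C a b c d * u d))"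
      by (simp add: sum_distrib_left)
    also have "\<dots> = (\<Sum>a\<in>UNIV. \<Sum>d\<in>UNIV. u a * u d * C c d a b)"
      by (rule sum.cong[OF refl])+ (metis C_pair_symmetric mult.commute mult.assoc)
    finally show ?thesis .
  qed
  also have "\<dots> = (\<Sum>d\<in>UNIV. \<Sum>a\<in>UNIV. u d * u a * C c d a b)"
    by (subst sum.swap) (simp add: mult_ac)
  also have "\<dots> = 0" using electric_0 by blast
  finally show ?thesis .
qed

lemma u_h: "(\<Sum>a\<in>UNIV. u a * h a c) = 0"
proof -
  have "(\<Sum>a\<in>UNIV. u a * h a c) = (\<Sum>a\<in>UNIV. u a * g a c) + (\<Sum>a\<in>UNIV. u a * w a) * w c"
    unfolding h_def by (simp add: sum_UNIV_4 algebra_simps)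
  then show ?thesis by (simp add: u_g u_w)
qed

lemma u_ric: "(\<Sum>a\<in>UNIV. u a * ric a c) = - 2 * \<psi> c + w c * psi_u"
proof -
  have "(\<Sum>a\<in>UNIV. u a * ric a c) = (\<Sum>a\<in>UNIV. ric c a * u a)"
    by (rule sum.cong[OF refl]) (metis ric_symmetric mult.commute)
  then show ?thesis by (simp add: ric_contract_u)
qed

lemma u_ric_contract_u: "(\<Sum>a\<in>UNIV. u a * (- 2 * \<psi> a + w a * psi_u)) = - 3 * psi_u"
proof -
  have "(\<Sum>a\<in>UNIV. u a * (- 2 * \<psi> a + w a * psi_u)) = - 2 * (\<Sum>a\<in>UNIV. u a * \<psi> a) + (\<Sum>a\<in>UNIV. u a * w a) * psi_u"
    by (simp add: sum_UNIV_4 algebra_simps)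
  then show ?thesis by (simp add: u_w psi_u_def)
qed

lemma u_C_contract_u_expand: "(\<Sum>a\<in>UNIV. u a * (\<Sum>d\<in>UNIV. C a b c d * u d))
  = psi_u * h b c - (1/2) * (w c * (- 2 * \<psi> b + w b * psi_u) + ric b c + w b * (- 2 * \<psi> c + w c * psi_u)
      + 3 * psi_u * g b c) + (S / 6) * (w c * w b + g b c)"
proof -
  define A1 where "A1 = (\<lambda>a. u a * \<psi> a)"
  define A2 where "A2 = (\<lambda>a. u a * h a c)"
  define A3 where "A3 = (\<lambda>a. u a * g a c)"
  define A4 where "A4 = (\<lambda>a. u a * w a)"
  define A5 where "A5 = (\<lambda>a. u a * ric a c)"
  define A6 where "A6 = (\<lambda>a. u a * (- 2 * \<psi> a + w a * psi_u))"
  define X1 where "X1 = - 2 * \<psi> b + w b * psi_u"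
  have pw: "\<And>a. u a * (\<Sum>d\<in>UNIV. C a b c d * u d) = A1 a * h b c - \<psi> b * A2 a
     - (1/2) * (A3 a * X1 - A4 a * ric b c + w b * A5 a - g b c * A6 a)
     + (S / 6) * (A3 a * w b - A4 a * g b c)"
    unfolding C_contract_u A1_def A2_def A3_def A4_def A5_def A6_def X1_def by (simp add: algebra_simps)
  have "(\<Sum>a\<in>UNIV. u a * (\<Sum>d\<in>UNIV. C a b c d * u d)) = sum A1 UNIV * h b c - \<psi> b * sum A2 UNIV
     - (1/2) * (sum A3 UNIV * X1 - sum A4 UNIV * ric b c + w b * sum A5 UNIV - g b c * sum A6 UNIV)
     + (S / 6) * (sum A3 UNIV * w b - sum A4 UNIV * g b c)"
    unfolding pw by (simp only: sum.distrib sum_subtractf sum_distrib_left[symmetric] sum_distrib_right[symmetric])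
  also have "\<dots> = psi_u * h b c - (1/2) * (w c * X1 + ric b c + w b * (- 2 * \<psi> c + w c * psi_u) + 3 * psi_u * g b c)
     + (S / 6) * (w c * w b + g b c)"
  proof -
    have s1: "sum A1 UNIV = psi_u" unfolding A1_def psi_u_def ..
    have s2: "sum A2 UNIV = 0" unfolding A2_def by (rule u_h)
    have s3: "sum A3 UNIV = w c" unfolding A3_def by (rule u_g)
    have s4: "sum A4 UNIV = -1" unfolding A4_def by (rule u_w)
    have s5: "sum A5 UNIV = - 2 * \<psi> c + w c * psi_u" unfolding A5_def by (rule u_ric)
    have s6: "sum A6 UNIV = - 3 * psi_u" unfolding A6_def by (rule u_ric_contract_u)
    show ?thesis unfolding s1 s2 s3 s4 s5 s6 by (simp add: algebra_simps)
  qed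
  finally show ?thesis unfolding X1_def .
qed

lemma ric_eq_if_electric_eq_0:
  assumes electric_0: "\<forall>a d. (\<Sum>b\<in>UNIV. \<Sum>c\<in>UNIV. u b * u c * C a b c d) = 0"
  shows "ric b c = 2 * (psi_u * h b c) - w c * (- 2 * \<psi> b + w b * psi_u) - w b * (- 2 * \<psi> c + w c * psi_u)
           - 3 * psi_u * g b c + 2 * ((S / 6) * (w c * w b + g b c))"
  using u_C_contract_u_expand[of b c] u_C_contract_u_eq_0[OF electric_0, of b c] by (simp add: field_simps)

lemma C_contract_u_eq_0:
  assumes electric_0: "\<forall>a d. (\<Sum>b\<in>UNIV. \<Sum>c\<in>UNIV. u b * u c * C a b c d) = 0"
  shows "(\<Sum>d\<in>UNIV. C a b c d * u d) = 0"
  unfolding C_contract_u ric_eq_if_electric_eq_0[OF electric_0] h_def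
  by (simp add: field_simps)

lemma u_C_eq_0:
  assumes electric_0: "\<forall>a d. (\<Sum>b\<in>UNIV. \<Sum>c\<in>UNIV. u b * u c * C a b c d) = 0"
  shows "(\<Sum>a\<in>UNIV. u a * C a b c d) = 0"
proof -
  have "u a * C a b c d = - (C c d b a * u a)" for a
    using C_pair_symmetric[of a b c d] C_antisym_cd[of c d a b] by simp
  then show ?thesis using C_contract_u_eq_0[OF electric_0, of c d b] by (simp add: sum_negf)
qed

end

section \<open>Adapted Lorentz frames\<close>

text \<open>The Lorentz boost taking \<open>(1,0,0,0)\<close> to the future-pointing unit time-like vector \<open>w\<close>.\<close>

definition boost_matrix :: "real^4 \<Rightarrow> real^4^4" where
  "boost_matrix w = (\<chi> i j. if i = 0 \<and> j = 0 then w$0 else if i = 0 then w$j else if j = 0 then w$i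
      else (if i = j then 1 else 0) + w$i * w$j * inverse (1 + w$0))"

lemma boost_matrix_congruent_minkowski:
  fixes w :: "real^4"
  assumes rel: "w$0 * w$0 = 1 + w$1 * w$1 + w$2 * w$2 + w$3 * w$3" and pos: "w$0 > 0"
  shows "transpose (boost_matrix w) ** minkowski ** boost_matrix w = minkowski"
proof -
  define t where "t = inverse (1 + w$0)"
  have t: "t * (1 + w$0) = 1" unfolding t_def using pos by simp
  have "\<forall>a b. (transpose (boost_matrix w) ** minkowski ** boost_matrix w) $ a $ b = minkowski $ a $ b"
    unfolding forall_4 matrix_matrix_mult_def transpose_def minkowski_def boost_matrix_def
    by (simp add: sum_UNIV_4 flip: t_def) (use rel t in \<open>intro conjI; algebra\<close>)
  then show ?thesis by (simp add: vec_eq_iff)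
qed

lemma quadratic_form_transpose:
  fixes P :: "real^'n^'n"
  shows "(\<Sum>k\<in>UNIV. (transpose P *v y) $ k * v $ k) = (\<Sum>j\<in>UNIV. y $ j * (P *v v) $ j)"
proof -
  have "(\<Sum>k\<in>UNIV. (transpose P *v y) $ k * v $ k) = (\<Sum>k\<in>UNIV. \<Sum>j\<in>UNIV. P$j$k * y$j * v$k)"
    by (simp add: matrix_vector_mult_def transpose_def sum_distrib_right)
  also have "\<dots> = (\<Sum>j\<in>UNIV. \<Sum>k\<in>UNIV. P$j$k * y$j * v$k)" by (rule sum.swap)
  finally show ?thesis by (simp add: matrix_vector_mult_def sum_distrib_left mult_ac)
qed

lemma quadratic_form_congruent:
  fixes P A :: "real^'n^'n"
  shows "(\<Sum>k\<in>UNIV. ((transpose P ** A ** P) *v v) $ k * v $ k)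
       = (\<Sum>k\<in>UNIV. (A *v (P *v v)) $ k * (P *v v) $ k)"
proof -
  have e: "(transpose P ** A ** P) *v v = transpose P *v (A *v (P *v v))"
    by (simp add: matrix_vector_mul_assoc matrix_mul_assoc del: transpose_matrix_vector)
  show ?thesis unfolding e by (rule quadratic_form_transpose)
qed

lemma quadratic_form_minkowski:
  "(\<Sum>k\<in>UNIV. (minkowski *v v) $ k * v $ k) = - (v$0 * v$0) + v$1 * v$1 + v$2 * v$2 + v$3 * v$3"
  by (simp add: matrix_vector_mult_def minkowski_def sum_UNIV_4)

lemma time_component_nonzero:
  fixes v :: "real^4"
  assumes "- (v$0 * v$0) + v$1 * v$1 + v$2 * v$2 + v$3 * v$3 = -1"
  shows "v$0 \<noteq> 0"
proof
  assume "v$0 = 0"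
  then have "v$1 * v$1 + v$2 * v$2 + v$3 * v$3 = -1" using assms by simp
  moreover have "v$1 * v$1 + v$2 * v$2 + v$3 * v$3 \<ge> 0" by simp
  ultimately show False by linarith
qed

text \<open>An orthonormal frame whose time-like leg is \<open>\<plusminus>v\<close>: write \<open>v\<close> in some orthonormal frame
  and compose with the boost taking \<open>(1,0,0,0)\<close> to \<open>\<plusminus>v\<close>.\<close>

lemma lorentz_frame_exists:
  fixes A :: "real^4^4" and v :: "real^4"
  assumes lor: "lorentzian_matrix A" and unit: "(\<Sum>k\<in>UNIV. (A *v v) $ k * v $ k) = -1"
  shows "\<exists>Q s. transpose Q ** A ** Q = minkowski \<and> (s = 1 \<or> s = -1) \<and> (\<forall>i. Q$i$0 = s * v$i)"
proof -
  obtain P where P: "invertible P" "transpose P ** A ** P = minkowski"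
    using lor unfolding lorentzian_matrix_def by blast
  define v' where "v' = matrix_inv P *v v"
  have Pv': "P *v v' = v" unfolding v'_def
    using P(1) by (simp add: matrix_vector_mul_assoc matrix_inv_right invertible_det_nz)
  have norm_v': "- (v'$0 * v'$0) + v'$1 * v'$1 + v'$2 * v'$2 + v'$3 * v'$3 = -1"
    using quadratic_form_congruent[of P A v'] P(2) unit Pv' quadratic_form_minkowski by simp
  define s :: real where "s = (if v'$0 > 0 then 1 else -1)"
  have s: "s = 1 \<or> s = -1" "s * s = 1" unfolding s_def by auto
  define w where "w = s *\<^sub>R v'"
  have "v'$0 \<noteq> 0" by (rule time_component_nonzero[OF norm_v'])
  then have "w$0 > 0" unfolding w_def s_def by auto
  moreover have "w$0 * w$0 = 1 + w$1 * w$1 + w$2 * w$2 + w$3 * w$3"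
  proof -
    have "w$i * w$i = v'$i * v'$i" for i unfolding w_def using s(2) by (simp add: algebra_simps)
    then show ?thesis using norm_v' by simp
  qed
  ultimately have L: "transpose (boost_matrix w) ** minkowski ** boost_matrix w = minkowski"
    by (intro boost_matrix_congruent_minkowski)
  define Q where "Q = P ** boost_matrix w"
  have "transpose Q ** A ** Q = transpose (boost_matrix w) ** (transpose P ** A ** P) ** boost_matrix w"
    unfolding Q_def by (simp add: matrix_transpose_mul matrix_mul_assoc)
  then have "transpose Q ** A ** Q = minkowski" using P(2) L by simp
  moreover have "Q$i$0 = s * v$i" for i
  proof -
    have "boost_matrix w $ k $ 0 = s * v'$k" for k unfolding boost_matrix_def w_def by simp
    then have "Q$i$0 = s * (P *v v')$i"
      unfolding Q_def by (simp add: matrix_matrix_mult_def matrix_vector_mult_def sum_distrib_left mult_ac)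
    then show ?thesis using Pv' by simp
  qed
  ultimately show ?thesis using s(1) by blast
qed

lemma congruent_minkowski_inverse:
  fixes A Q :: "real^4^4"
  assumes dA: "det A \<noteq> 0" and Q: "transpose Q ** A ** Q = minkowski"
  shows "Q ** minkowski ** transpose Q = matrix_inv A"
proof -
  have dQ: "det Q \<noteq> 0" using det_congruent_minkowski_nonzero[OF Q] by blast
  have "(Q ** minkowski ** transpose Q ** A) ** Q = Q ** minkowski ** (transpose Q ** A ** Q)"
    by (simp add: matrix_mul_assoc)
  also have "\<dots> = Q" using Q minkowski_squared by (simp add: matrix_mul_assoc[symmetric])
  finally have e: "(Q ** minkowski ** transpose Q ** A) ** Q = Q" .
  have "Q ** minkowski ** transpose Q ** A = (Q ** minkowski ** transpose Q ** A) ** (Q ** matrix_inv Q)"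
    using matrix_inv_right[OF dQ] by simp
  also have "\<dots> = Q ** matrix_inv Q" using e by (simp add: matrix_mul_assoc)
  finally have "Q ** minkowski ** transpose Q ** A = mat 1" using matrix_inv_right[OF dQ] by simp
  then have "Q ** minkowski ** transpose Q = (Q ** minkowski ** transpose Q) ** (A ** matrix_inv A)"
    using matrix_inv_right[OF dA] by simp
  also have "\<dots> = matrix_inv A"
    using \<open>Q ** minkowski ** transpose Q ** A = mat 1\<close> by (simp add: matrix_mul_assoc)
  finally show ?thesis .
qed

lemma matrix_inv_eq_frame_sum:
  fixes A Q :: "real^4^4"
  assumes "det A \<noteq> 0" and "transpose Q ** A ** Q = minkowski"
  shows "matrix_inv A $ i $ k = (\<Sum>a\<in>UNIV. Q$i$a * minkowski$a$a * Q$k$a)"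
proof -
  have "(Q ** minkowski) $ i $ a = Q$i$a * minkowski$a$a" for a
    by (simp add: matrix_matrix_mult_def minkowski_def if_distrib[of "(*) _"] cong: if_cong)
  then show ?thesis
    unfolding congruent_minkowski_inverse[OF assms, symmetric]
    by (simp add: matrix_matrix_mult_def[of "Q ** minkowski"] transpose_def)
qed

section \<open>Trace-free tensors annihilated by a time-like vector\<close>

text \<open>Such a tensor, with the time-like index \<open>0\<close> removed, is a tensor with the antisymmetries of
  a curvature tensor in dimension three, where it is determined by its trace.\<close>

lemma spatial_trace_free_eq_0:
  fixes W :: "4 \<Rightarrow> 4 \<Rightarrow> 4 \<Rightarrow> 4 \<Rightarrow> real"
  assumes ab: "\<And>a b c d. W a b c d = - W b a c d" and cd: "\<And>a b c d. W a b c d = - W a b d c"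
    and last_0: "\<And>a b c. W a b c 0 = 0" and first_0: "\<And>b c d. W 0 b c d = 0"
    and trace: "\<And>b d. W 1 b 1 d + W 2 b 2 d + W 3 b 3 d = 0"
  shows "W a b c d = 0"
proof -
  have diag: "W a a c d = 0" "W a b c c = 0" for a b c d
    using ab[of a a c d] cd[of a b c c] by simp_all
  have zero: "W a b 0 d = 0" "W a 0 c d = 0" for a b c d
    using cd[of a b 0 d] last_0[of a b d] ab[of a 0 c d] first_0[of a c d] by simp_all
  have swap: "\<And>c d. W 2 1 c d = - W 1 2 c d" "\<And>c d. W 3 1 c d = - W 1 3 c d"
    "\<And>c d. W 3 2 c d = - W 2 3 c d" "\<And>a b. W a b 2 1 = - W a b 1 2"
    "\<And>a b. W a b 3 1 = - W a b 1 3" "\<And>a b. W a b 3 2 = - W a b 2 3"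
    by (rule ab cd)+
  note N = swap diag zero first_0 last_0
  have "W 1 2 1 2 + W 1 3 1 3 = 0" "W 1 2 1 2 + W 2 3 2 3 = 0" "W 1 3 1 3 + W 2 3 2 3 = 0"
    using trace[of 1 1] trace[of 2 2] trace[of 3 3] by (simp_all add: N)
  then have "W 1 2 1 2 = 0" "W 1 3 1 3 = 0" "W 2 3 2 3 = 0" by linarith+
  moreover have "W 1 2 1 3 = 0" "W 1 3 1 2 = 0" "W 1 2 2 3 = 0" "W 2 3 1 2 = 0" "W 1 3 2 3 = 0"
    "W 2 3 1 3 = 0"
    using trace[of 2 3] trace[of 3 2] trace[of 1 3] trace[of 3 1] trace[of 1 2] trace[of 2 1]
    by (simp_all add: N)
  ultimately have "\<forall>a b c d. W a b c d = 0" unfolding forall_4 by (simp add: N)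
  then show ?thesis by blast
qed

definition frame_components ::
  "real^'n^'n \<Rightarrow> ('n \<Rightarrow> 'n \<Rightarrow> 'n \<Rightarrow> 'n \<Rightarrow> real) \<Rightarrow> 'n \<Rightarrow> 'n \<Rightarrow> 'n \<Rightarrow> 'n \<Rightarrow> real" where
  "frame_components Q T a b c d =
     (\<Sum>i\<in>UNIV. Q$i$a * (\<Sum>j\<in>UNIV. Q$j$b * (\<Sum>k\<in>UNIV. Q$k$c * (\<Sum>l\<in>UNIV. Q$l$d * T i j k l))))"

lemma sum_mult_sum_antisym:
  fixes f g :: "'i::finite \<Rightarrow> real"
  assumes "\<And>i j. X i j = - X j i"
  shows "(\<Sum>i\<in>UNIV. f i * (\<Sum>j\<in>UNIV. g j * X i j)) = - (\<Sum>i\<in>UNIV. g i * (\<Sum>j\<in>UNIV. f j * X i j))"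
  by (subst sum_mult_sum_commute) (subst assms, simp add: sum_negf)

lemma frame_components_antisym_ab:
  assumes "\<And>i j k l. T i j k l = - T j i k l"
  shows "frame_components Q T a b c d = - frame_components Q T b a c d"
  unfolding frame_components_def by (rule sum_mult_sum_antisym) (subst assms, simp add: sum_negf)

lemma frame_components_antisym_cd:
  assumes "\<And>i j k l. T i j k l = - T i j l k"
  shows "frame_components Q T a b c d = - frame_components Q T a b d c"
proof -
  have "(\<Sum>k\<in>UNIV. Q$k$c * (\<Sum>l\<in>UNIV. Q$l$d * T i j k l))
      = - (\<Sum>k\<in>UNIV. Q$k$d * (\<Sum>l\<in>UNIV. Q$l$c * T i j k l))" for i j
    by (rule sum_mult_sum_antisym) (rule assms)
  then show ?thesis unfolding frame_components_def by (simp add: sum_negf)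
qed

lemma frame_components_last_eq_0:
  assumes "\<And>i j k. (\<Sum>l\<in>UNIV. Q$l$d * T i j k l) = 0"
  shows "frame_components Q T a b c d = 0"
  unfolding frame_components_def assms by simp

lemma frame_components_first_eq_0:
  assumes "\<And>j k l. (\<Sum>i\<in>UNIV. Q$i$a * T i j k l) = 0"
  shows "frame_components Q T a b c d = 0"
proof -
  have "frame_components Q T a b c d
      = (\<Sum>j\<in>UNIV. Q$j$b * (\<Sum>i\<in>UNIV. Q$i$a * (\<Sum>k\<in>UNIV. Q$k$c * (\<Sum>l\<in>UNIV. Q$l$d * T i j k l))))"
    unfolding frame_components_def by (rule sum_mult_sum_commute)
  also have "\<dots> = (\<Sum>j\<in>UNIV. Q$j$b * (\<Sum>k\<in>UNIV. Q$k$c * (\<Sum>i\<in>UNIV. Q$i$a * (\<Sum>l\<in>UNIV. Q$l$d * T i j k l))))"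
    by (simp only: sum_mult_sum_commute[of "\<lambda>i. Q$i$a" "\<lambda>k. Q$k$c"])
  also have "\<dots> = (\<Sum>j\<in>UNIV. Q$j$b * (\<Sum>k\<in>UNIV. Q$k$c * (\<Sum>l\<in>UNIV. Q$l$d * (\<Sum>i\<in>UNIV. Q$i$a * T i j k l))))"
    by (simp only: sum_mult_sum_commute[of "\<lambda>i. Q$i$a" "\<lambda>l. Q$l$d"])
  finally show ?thesis by (simp add: assms)
qed

lemma sum_contract_pair:
  fixes e :: "'n::finite \<Rightarrow> real"
  shows "(\<Sum>a\<in>UNIV. e a * (\<Sum>i\<in>UNIV. P i a * (\<Sum>k\<in>UNIV. P k a * Z i k)))
       = (\<Sum>i\<in>UNIV. \<Sum>k\<in>UNIV. (\<Sum>a\<in>UNIV. P i a * e a * P k a) * Z i k)"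
proof -
  have "(\<Sum>a\<in>UNIV. e a * (\<Sum>i\<in>UNIV. P i a * (\<Sum>k\<in>UNIV. P k a * Z i k)))
      = (\<Sum>a\<in>UNIV. \<Sum>i\<in>UNIV. \<Sum>k\<in>UNIV. P i a * e a * P k a * Z i k)"
    by (simp add: sum_distrib_left mult_ac)
  also have "\<dots> = (\<Sum>i\<in>UNIV. \<Sum>a\<in>UNIV. \<Sum>k\<in>UNIV. P i a * e a * P k a * Z i k)" by (rule sum.swap)
  also have "\<dots> = (\<Sum>i\<in>UNIV. \<Sum>k\<in>UNIV. \<Sum>a\<in>UNIV. P i a * e a * P k a * Z i k)"
    by (rule sum.cong[OF refl], rule sum.swap)
  finally show ?thesis by (simp add: sum_distrib_right)
qed

lemma sum_sum_mult_nested: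
  fixes A B :: "'n::finite \<Rightarrow> real"
  shows "(\<Sum>i\<in>UNIV. \<Sum>k\<in>UNIV. c i k * (\<Sum>j\<in>UNIV. A j * (\<Sum>l\<in>UNIV. B l * T i j k l)))
    = (\<Sum>j\<in>UNIV. A j * (\<Sum>l\<in>UNIV. B l * (\<Sum>i\<in>UNIV. \<Sum>k\<in>UNIV. c i k * T i j k l)))"
proof -
  have "(\<Sum>i\<in>UNIV. \<Sum>k\<in>UNIV. c i k * (\<Sum>j\<in>UNIV. A j * (\<Sum>l\<in>UNIV. B l * T i j k l)))
      = (\<Sum>i\<in>UNIV. \<Sum>k\<in>UNIV. \<Sum>j\<in>UNIV. \<Sum>l\<in>UNIV. A j * (B l * (c i k * T i j k l)))"
    by (simp add: sum_distrib_left mult_ac)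
  also have "\<dots> = (\<Sum>i\<in>UNIV. \<Sum>j\<in>UNIV. \<Sum>k\<in>UNIV. \<Sum>l\<in>UNIV. A j * (B l * (c i k * T i j k l)))"
    by (rule sum.cong[OF refl], rule sum.swap)
  also have "\<dots> = (\<Sum>j\<in>UNIV. \<Sum>i\<in>UNIV. \<Sum>k\<in>UNIV. \<Sum>l\<in>UNIV. A j * (B l * (c i k * T i j k l)))"
    by (rule sum.swap)
  also have "\<dots> = (\<Sum>j\<in>UNIV. \<Sum>i\<in>UNIV. \<Sum>l\<in>UNIV. \<Sum>k\<in>UNIV. A j * (B l * (c i k * T i j k l)))"
    by (rule sum.cong[OF refl], rule sum.cong[OF refl], rule sum.swap)
  also have "\<dots> = (\<Sum>j\<in>UNIV. \<Sum>l\<in>UNIV. \<Sum>i\<in>UNIV. \<Sum>k\<in>UNIV. A j * (B l * (c i k * T i j k l)))"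
    by (rule sum.cong[OF refl], rule sum.swap)
  finally show ?thesis by (simp add: sum_distrib_left)
qed

lemma frame_components_trace:
  "(\<Sum>a\<in>UNIV. e a * frame_components Q T a b a d)
   = (\<Sum>j\<in>UNIV. Q$j$b * (\<Sum>l\<in>UNIV. Q$l$d *
        (\<Sum>i\<in>UNIV. \<Sum>k\<in>UNIV. (\<Sum>a\<in>UNIV. Q$i$a * e a * Q$k$a) * T i j k l)))"
  (is "_ = ?rhs")
proof -
  have swap: "(\<Sum>j\<in>UNIV. Q$j$b * (\<Sum>k\<in>UNIV. Q$k$a * (\<Sum>l\<in>UNIV. Q$l$d * T i j k l)))
      = (\<Sum>k\<in>UNIV. Q$k$a * (\<Sum>j\<in>UNIV. Q$j$b * (\<Sum>l\<in>UNIV. Q$l$d * T i j k l)))" for a i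
    by (rule sum_mult_sum_commute)
  have "(\<Sum>a\<in>UNIV. e a * frame_components Q T a b a d)
      = (\<Sum>a\<in>UNIV. e a * (\<Sum>i\<in>UNIV. Q$i$a * (\<Sum>k\<in>UNIV. Q$k$a *
          (\<Sum>j\<in>UNIV. Q$j$b * (\<Sum>l\<in>UNIV. Q$l$d * T i j k l)))))"
    unfolding frame_components_def swap ..
  also have "\<dots> = (\<Sum>i\<in>UNIV. \<Sum>k\<in>UNIV. (\<Sum>a\<in>UNIV. Q$i$a * e a * Q$k$a) *
          (\<Sum>j\<in>UNIV. Q$j$b * (\<Sum>l\<in>UNIV. Q$l$d * T i j k l)))"
    by (rule sum_contract_pair)
  also have "\<dots> = ?rhs" by (rule sum_sum_mult_nested)
  finally show ?thesis .
qed

lemma sum_columns_eq_0_imp_eq_0: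
  fixes Q :: "real^'n^'n"
  assumes "det Q \<noteq> 0" and "\<And>a. (\<Sum>i\<in>UNIV. Q$i$a * f i) = 0"
  shows "f i = 0"
proof -
  define v :: "real^'n" where "v = (\<chi> i. f i)"
  have "transpose Q *v v = 0"
    using assms(2) by (simp add: vec_eq_iff matrix_vector_mult_def transpose_def v_def
        del: transpose_matrix_vector)
  moreover have "matrix_inv (transpose Q) *v (transpose Q *v v) = v"
    using assms(1) matrix_inv_left[of "transpose Q"]
    by (simp add: matrix_vector_mul_assoc del: transpose_matrix_vector)
  ultimately have "v = 0" by (metis matrix_vector_mult_0_right)
  then show ?thesis by (simp add: v_def vec_eq_iff)
qed

lemma frame_components_eq_0_imp_eq_0:
  assumes "det Q \<noteq> 0" and "\<And>a b c d. frame_components Q T a b c d = 0"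
  shows "T i j k l = 0"
proof -
  have "(\<Sum>j\<in>UNIV. Q$j$b * (\<Sum>k\<in>UNIV. Q$k$c * (\<Sum>l\<in>UNIV. Q$l$d * T i j k l))) = 0" for i b c d
    by (rule sum_columns_eq_0_imp_eq_0[OF assms(1)]) (use assms(2) in \<open>simp add: frame_components_def\<close>)
  then have "(\<Sum>k\<in>UNIV. Q$k$c * (\<Sum>l\<in>UNIV. Q$l$d * T i j k l)) = 0" for i j c d
    by (rule sum_columns_eq_0_imp_eq_0[OF assms(1)])
  then have "(\<Sum>l\<in>UNIV. Q$l$d * T i j k l) = 0" for i j k d
    by (rule sum_columns_eq_0_imp_eq_0[OF assms(1)])
  then show ?thesis by (rule sum_columns_eq_0_imp_eq_0[OF assms(1)])
qed

lemma trace_free_annihilated_eq_0: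
  fixes A :: "real^4^4" and v :: "real^4" and T :: "4 \<Rightarrow> 4 \<Rightarrow> 4 \<Rightarrow> 4 \<Rightarrow> real"
  assumes lor: "lorentzian_matrix A" and unit: "(\<Sum>k\<in>UNIV. (A *v v)$k * v$k) = -1"
    and ab: "\<And>a b c d. T a b c d = - T b a c d" and cd: "\<And>a b c d. T a b c d = - T a b d c"
    and last: "\<And>a b c. (\<Sum>d\<in>UNIV. T a b c d * v$d) = 0"
    and first: "\<And>b c d. (\<Sum>a\<in>UNIV. v$a * T a b c d) = 0"
    and trace: "\<And>b d. (\<Sum>a\<in>UNIV. \<Sum>c\<in>UNIV. matrix_inv A $ a $ c * T a b c d) = 0"
  shows "T a b c d = 0"
proof -
  obtain Q s where Q: "transpose Q ** A ** Q = minkowski" "\<And>i. Q$i$0 = s * v$i"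
    using lorentz_frame_exists[OF lor unit] by blast
  have ginv: "matrix_inv A $ i $ k = (\<Sum>a\<in>UNIV. Q$i$a * minkowski$a$a * Q$k$a)" for i k
    by (rule matrix_inv_eq_frame_sum[OF lorentzian_matrix_det_nonzero[OF lor] Q(1)])
  let ?W = "frame_components Q T"
  have W_first: "?W 0 b c d = 0" for b c d
    by (rule frame_components_first_eq_0) (use first in \<open>simp add: Q(2) mult.assoc flip: sum_distrib_left\<close>)
  have "?W a b c d = 0" for a b c d
  proof (rule spatial_trace_free_eq_0)
    show "?W a b c d = - ?W b a c d" for a b c d by (rule frame_components_antisym_ab) (rule ab)
    show "?W a b c d = - ?W a b d c" for a b c d by (rule frame_components_antisym_cd) (rule cd)
    show "?W a b c 0 = 0" for a b c
      by (rule frame_components_last_eq_0) (use last in \<open>simp add: Q(2) mult_ac flip: sum_distrib_left\<close>)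
    show "?W 0 b c d = 0" for b c d by (rule W_first)
    show "?W 1 b 1 d + ?W 2 b 2 d + ?W 3 b 3 d = 0" for b d
    proof -
      have "(\<Sum>a\<in>UNIV. minkowski$a$a * ?W a b a d) = 0"
        unfolding frame_components_trace by (simp add: ginv[symmetric] trace)
      then show ?thesis using W_first[of b 0 d] by (simp add: sum_UNIV_4 minkowski_def)
    qed
  qed
  then show ?thesis
    by (rule frame_components_eq_0_imp_eq_0[OF det_congruent_minkowski_nonzero(1)[OF Q(1)]])
qed

section \<open>The Weyl tensor of a torse-forming space-time\<close>

context torse_forming_chart
begin

lemma torse_forming_point_at:
  assumes x: "x \<in> U" and unit: "(\<Sum>k\<in>UNIV. lower G u x k * u x $ k) = -1"
  shows "torse_forming_point (\<lambda>i j. G x $ i $ j) (ginv G x) (riemann_up G x) (riemann G x) (weyl G x)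
    (\<lambda>k. u x $ k) (lower G u x) (\<lambda>a. partial a \<phi> x - (\<phi> x)\<^sup>2 * lower G u x a)
    (ricci G x) (scalar_curv G x)"
  by unfold_locales
    (rule metric_symmetric[OF x] ginv_symmetric[OF x] ginv_metric[OF x]
      riemann_def riemann_up_antisym_cd riemann_up_bianchi[OF x] riemann_antisym_ab[OF x]
      ricci_def scalar_curv_def weyl_def lower_def unit lower_riemann_up[OF x])+

lemma weyl_eq_0_if_electric_eq_0:
  assumes x: "x \<in> U" and unit: "(\<Sum>k\<in>UNIV. lower G u x k * u x $ k) = -1"
    and electric_0: "\<forall>a d. electric G u x a d = 0"
  shows "weyl G x a b c d = 0"
proof -
  interpret P: torse_forming_point "\<lambda>i j. G x $ i $ j" "ginv G x" "riemann_up G x" "riemann G x"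
    "weyl G x" "\<lambda>k. u x $ k" "lower G u x" "\<lambda>a. partial a \<phi> x - (\<phi> x)\<^sup>2 * lower G u x a"
    "ricci G x" "scalar_curv G x"
    by (rule torse_forming_point_at[OF x unit])
  have electric_0': "\<forall>a d. (\<Sum>b\<in>UNIV. \<Sum>c\<in>UNIV. u x $ b * u x $ c * weyl G x a b c d) = 0"
    using electric_0 unfolding electric_def by simp
  have "(\<Sum>k\<in>UNIV. (G x *v u x) $ k * u x $ k) = -1"
    using unit by (simp add: matrix_vector_mult_def lower_def)
  then show ?thesis
  proof (rule trace_free_annihilated_eq_0[OF metric_lorentzian[OF x]])
    show "weyl G x a b c d = - weyl G x b a c d" "weyl G x a b c d = - weyl G x a b d c" for a b c d
      by (rule P.C_antisym_ab P.C_antisym_cd)+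
    show "(\<Sum>d\<in>UNIV. weyl G x a b c d * u x $ d) = 0" for a b c
      by (rule P.C_contract_u_eq_0[OF electric_0'])
    show "(\<Sum>a\<in>UNIV. u x $ a * weyl G x a b c d) = 0" for b c d
      by (rule P.u_C_eq_0[OF electric_0'])
    show "(\<Sum>a\<in>UNIV. \<Sum>c\<in>UNIV. matrix_inv (G x) $ a $ c * weyl G x a b c d) = 0" for b d
      using P.C_trace_free unfolding ginv_def by simp
  qed
qed

end

theorem corollary3p2:
  fixes U :: "(real^4) set"
    and G :: "real^4 \<Rightarrow> real^4^4"
    and u :: "real^4 \<Rightarrow> real^4"
    and \<phi> :: "real^4 \<Rightarrow> real"
  assumes metric: "lorentzian_metric U G"
    and u_smooth: "\<forall>k. smooth_on U (\<lambda>x. u x $ k)"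
    and phi_smooth: "smooth_on U \<phi>"
    and u_unit: "\<forall>x\<in>U. (\<Sum>k\<in>UNIV. lower G u x k * u x $ k) = -1"
    and torse: "\<forall>x\<in>U. \<forall>i j. cov_deriv_form G u x i j
                    = \<phi> x * (G x $ i $ j + lower G u x i * lower G u x j)"
  shows "(\<forall>x\<in>U. \<forall>a b c d. weyl G x a b c d = 0) \<longleftrightarrow>
         (\<forall>x\<in>U. \<forall>a d. electric G u x a d = 0)"
proof
  assume "\<forall>x\<in>U. \<forall>a b c d. weyl G x a b c d = 0"
  then show "\<forall>x\<in>U. \<forall>a d. electric G u x a d = 0" unfolding electric_def by simp
next
  assume electric_0: "\<forall>x\<in>U. \<forall>a d. electric G u x a d = 0"
  interpret torse_forming_chart U G u \<phi>
    by unfold_locales (fact metric u_smooth phi_smooth torse)+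
  show "\<forall>x\<in>U. \<forall>a b c d. weyl G x a b c d = 0"
    using weyl_eq_0_if_electric_eq_0 u_unit electric_0 by blast
qed

end
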